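(* Let $\mathfrak g$ be a Lie algebra over a field $\mathbb{K}$ of characteristic zero, with a vector space decomposition $\mathfrak g=\mathfrak g^-\oplus\mathfrak g^+$, and let $P:\mathfrak g\to\mathfrak g$ be the idempotent projection onto $\mathfrak g^-$ along $\mathfrak g^+$. Let $\bar{\mathfrak g}:=\mathfrak g[[s,t]]$ (commuting formal variables $s,t$), filtered by total degree in $s,t$, so $\bar{\mathfrak g}_1=s\mathfrak g[[s,t]]+t\mathfrak g[[s,t]]$; extend $P$ coefficientwise to $\bar{\mathfrak g}$ and put $\tilde P=\mathrm{id}-P$. Let $\chi:\bar{\mathfrak g}_1\to\bar{\mathfrak g}_1$ be the BCH-recursion map associated to $P$, and $D_P(v):=\big(P(\chi(v)),\tilde P(\chi(v))\big)$. Set $U:=s\mathfrak g^-[[s,t]]\times t\mathfrak g^+[[s,t]]$ and $V:=s\mathfrak g^-[[s,t]]\oplus t\mathfrak g^+[[s,t]]$. Then: (1) the map $C(a_-,a_+)=a_-+a_++\mathrm{BCH}(a_-,a_+)$ restricts to a bijection $U\to V$, whose inverse is the restriction of $D_P$ to $V$; (2) the map $\Psi:t\mathfrak g^+[[s,t]]\times s\mathfrak g^-[[s,t]]\to s\mathfrak g^-[[s,t]]\times t\mathfrak g^+[[s,t]]$, $\Psi(a_+,a_-):=D_P\big(C(a_+,a_-)\big)=\Big(P\big(\chi(C(a_+,a_-))\big),\tilde P\big(\chi(C(a_+,a_-))\big)\Big)$, is well defined, bijective, and is the unique bijection such that for all $a_+\in t\mathfrak g^+[[s,t]]$, $a_-\in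 s\mathfrak g^-[[s,t]]$, $$\exp(a_+)\exp(a_-)=\exp\big(\Psi_-(a_+,a_-)\big)\exp\big(\Psi_+(a_+,a_-)\big),$$ where $\Psi=(\Psi_-,\Psi_+)$.
   Context: $\mathrm{BCH}(x,y)$ is the Baker--Campbell--Hausdorff Lie series, defined by $\exp(x)\exp(y)=\exp(x+y+\mathrm{BCH}(x,y))$; for $u,v\in\bar{\mathfrak g}_1$ it converges in $\bar{\mathfrak g}_1$. Exponentials are taken in the completion of the universal enveloping algebra of $\bar{\mathfrak g}$ with respect to the filtration by total $(s,t)$-degree. The BCH-recursion map associated to $P$ is the unique map $\chi:\bar{\mathfrak g}_1\to\bar{\mathfrak g}_1$ with $\chi(a)=a-\mathrm{BCH}\big(P(\chi(a)),\tilde P(\chi(a))\big)$ for all $a$, obtained as the limit of the iteration $\chi_{(0)}(a)=a$, $\chi_{(n+1)}(a)=a-\mathrm{BCH}(P(\chi_{(n)}(a)),\tilde P(\chi_{(n)}(a)))$. *)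

theory Defs
  imports Main
begin

text \<open>Model: the Lie algebra g over a field 'k of characteristic zero is given as a
Lie subalgebra G (closed under commutators) of an associative unital 'k-algebra 'a
(scalar action sc). Power series in commuting variables s,t with coefficients in 'a
are functions nat => nat => 'a (f i j = coefficient of s^i t^j).\<close>

type_synonym 'a fps2 = "nat \<Rightarrow> nat \<Rightarrow> 'a"

definition kalg :: "('k::field \<Rightarrow> 'a::ring_1 \<Rightarrow> 'a) \<Rightarrow> bool" where
  "kalg sc \<longleftrightarrow>
     (\<forall>a b x. sc (a + b) x = sc a x + sc b x) \<and>
     (\<forall>a x y. sc a (x + y) = sc a x + sc a y) \<and>
     (\<forall>a b x. sc (a * b) x = sc a (sc b x)) \<and>
     (\<forall>x. sc 1 x = x) \<and>
     (\<forall>a x y. sc a (x * y) = sc a x * y) \<and>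
     (\<forall>a x y. sc a (x * y) = x * sc a y)"

definition subspace_k :: "('k \<Rightarrow> 'a::ab_group_add \<Rightarrow> 'a) \<Rightarrow> 'a set \<Rightarrow> bool" where
  "subspace_k sc S \<longleftrightarrow> 0 \<in> S \<and> (\<forall>x\<in>S. \<forall>y\<in>S. x + y \<in> S) \<and> (\<forall>c. \<forall>x\<in>S. sc c x \<in> S)"

definition fadd :: "'a::plus fps2 \<Rightarrow> 'a fps2 \<Rightarrow> 'a fps2" where
  "fadd f g = (\<lambda>i j. f i j + g i j)"

definition fsub :: "'a::minus fps2 \<Rightarrow> 'a fps2 \<Rightarrow> 'a fps2" where
  "fsub f g = (\<lambda>i j. f i j - g i j)"

definition fone :: "'a::{zero,one} fps2" where
  "fone = (\<lambda>i j. if i = 0 \<and> j = 0 then 1 else 0)"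

definition fmul :: "'a::ring_1 fps2 \<Rightarrow> 'a fps2 \<Rightarrow> 'a fps2" where
  "fmul f g = (\<lambda>i j. \<Sum>p\<le>i. \<Sum>q\<le>j. f p q * g (i - p) (j - q))"

primrec fpow :: "'a::ring_1 fps2 \<Rightarrow> nat \<Rightarrow> 'a fps2" where
  "fpow f 0 = fone"
| "fpow f (Suc n) = fmul f (fpow f n)"

text \<open>exp(f) = sum_n f^n/n!; for f without constant term, f^n has total degree >= n,
so the coefficient of s^i t^j is the finite sum over n <= i+j.\<close>
definition fexp :: "('k::field_char_0 \<Rightarrow> 'a::ring_1 \<Rightarrow> 'a) \<Rightarrow> 'a fps2 \<Rightarrow> 'a fps2" where
  "fexp sc f = (\<lambda>i j. \<Sum>n\<le>i+j. sc (inverse (fact n)) (fpow f n i j))"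

definition BCH :: "('k::field_char_0 \<Rightarrow> 'a::ring_1 \<Rightarrow> 'a) \<Rightarrow> 'a fps2 \<Rightarrow> 'a fps2 \<Rightarrow> 'a fps2" where
  "BCH sc x y = (THE z. z 0 0 = 0 \<and> fmul (fexp sc x) (fexp sc y) = fexp sc (fadd (fadd x y) z))"

definition Cmap :: "('k::field_char_0 \<Rightarrow> 'a::ring_1 \<Rightarrow> 'a) \<Rightarrow> 'a fps2 \<Rightarrow> 'a fps2 \<Rightarrow> 'a fps2" where
  "Cmap sc x y = fadd (fadd x y) (BCH sc x y)"

definition proj :: "'a::ab_group_add set \<Rightarrow> 'a set \<Rightarrow> 'a \<Rightarrow> 'a" where
  "proj Gm Gp x = (THE m. m \<in> Gm \<and> x - m \<in> Gp)"

definition Pbar :: "'a::ab_group_add set \<Rightarrow> 'a set \<Rightarrow> 'a fps2 \<Rightarrow> 'a fps2" where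
  "Pbar Gm Gp f = (\<lambda>i j. proj Gm Gp (f i j))"

definition Ptbar :: "'a::ab_group_add set \<Rightarrow> 'a set \<Rightarrow> 'a fps2 \<Rightarrow> 'a fps2" where
  "Ptbar Gm Gp f = (\<lambda>i j. f i j - proj Gm Gp (f i j))"

definition gbar :: "'a set \<Rightarrow> 'a fps2 set" where
  "gbar G = {f. \<forall>i j. f i j \<in> G}"

definition gbar1 :: "'a::zero set \<Rightarrow> 'a fps2 set" where
  "gbar1 G = {f \<in> gbar G. f 0 0 = 0}"

definition sG :: "'a::zero set \<Rightarrow> 'a fps2 set" where
  "sG S = {f. \<forall>i j. f i j \<in> S \<and> (i = 0 \<longrightarrow> f i j = 0)}"

definition tG :: "'a::zero set \<Rightarrow> 'a fps2 set" where
  "tG S = {f. \<forall>i j. f i j \<in> S \<and> (j = 0 \<longrightarrow> f i j = 0)}"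

definition Vset :: "'a::ab_group_add set \<Rightarrow> 'a set \<Rightarrow> 'a fps2 set" where
  "Vset Gm Gp = {fadd a b | a b. a \<in> sG Gm \<and> b \<in> tG Gp}"

primrec chi_iter :: "('k::field_char_0 \<Rightarrow> 'a::ring_1 \<Rightarrow> 'a) \<Rightarrow> 'a set \<Rightarrow> 'a set \<Rightarrow> 'a fps2 \<Rightarrow> nat \<Rightarrow> 'a fps2" where
  "chi_iter sc Gm Gp a 0 = a"
| "chi_iter sc Gm Gp a (Suc n) =
     fsub a (BCH sc (Pbar Gm Gp (chi_iter sc Gm Gp a n)) (Ptbar Gm Gp (chi_iter sc Gm Gp a n)))"

definition chi :: "('k::field_char_0 \<Rightarrow> 'a::ring_1 \<Rightarrow> 'a) \<Rightarrow> 'a set \<Rightarrow> 'a set \<Rightarrow> 'a fps2 \<Rightarrow> 'a fps2" where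
  "chi sc Gm Gp a = (\<lambda>i j. THE v. \<exists>N. \<forall>n\<ge>N. chi_iter sc Gm Gp a n i j = v)"

definition DP :: "('k::field_char_0 \<Rightarrow> 'a::ring_1 \<Rightarrow> 'a) \<Rightarrow> 'a set \<Rightarrow> 'a set \<Rightarrow> 'a fps2 \<Rightarrow> 'a fps2 \<times> 'a fps2" where
  "DP sc Gm Gp v = (Pbar Gm Gp (chi sc Gm Gp v), Ptbar Gm Gp (chi sc Gm Gp v))"

definition Psi :: "('k::field_char_0 \<Rightarrow> 'a::ring_1 \<Rightarrow> 'a) \<Rightarrow> 'a set \<Rightarrow> 'a set \<Rightarrow> 'a fps2 \<times> 'a fps2 \<Rightarrow> 'a fps2 \<times> 'a fps2" where
  "Psi sc Gm Gp p = DP sc Gm Gp (Cmap sc (fst p) (snd p))"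

end

theory Submission
  imports Defs "HOL-Computational_Algebra.Formal_Power_Series"
begin

text \<open>Exponential, logarithm and BCH are obtained
  by successive approximation, and \<open>BCH(x, y)\<close> agrees below \<open>d + 1\<close> whenever its arguments
  agree below \<open>d\<close>; this makes the BCH recursion converge. BCH of Lie series is a Lie series:
  applying the Euler derivation \<open>E\<close> to \<open>exp W = exp x exp y\<close> gives
  \<open>dexp\<^sub>W(E W) = exp(-ad y) dexp\<^sub>x(E x) + dexp\<^sub>y(E y)\<close>, and \<open>W\<close> is recovered from
  \<open>dexp\<^sub>W(E W)\<close> degree by degree. Restricting coefficients to an axis is a ring
  homomorphism, so \<open>BCH(x, y)\<close> vanishes on an axis when \<open>x\<close> or \<open>y\<close> does; consequently
  \<open>a \<mapsto> (P \<chi>(a), P\<^sup>~ \<chi>(a))\<close> inverts \<open>C\<close> on the series whose pure \<open>s\<close>-part lies in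
  \<open>\<gg>\<^sup>-\<close> and whose pure \<open>t\<close>-part lies in \<open>\<gg>\<^sup>+\<close>. The same argument with the roles of
  \<open>\<gg>\<^sup>\<plusminus>\<close> and of \<open>s, t\<close> exchanged shows that this set is also the bijective image of
  \<open>t\<gg>\<^sup>+[[s,t]] \<times> s\<gg>\<^sup>-[[s,t]]\<close> under \<open>C\<close>, so \<open>\<Psi> = D\<^sub>P \<circ> C\<close> is a bijection;
  uniqueness of \<open>\<Psi>\<close> follows from injectivity of \<open>exp\<close>.\<close>

unbundle fps_syntax

definition dexp_coeff :: "nat \<Rightarrow> 'k::field_char_0" where
  "dexp_coeff n = (-1) ^ n / fact (Suc n)"

definition exp_neg_coeff :: "nat \<Rightarrow> 'k::field_char_0" where
  "exp_neg_coeff n = (-1) ^ n / fact n"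

text \<open>\<^term>\<open>ad_coeff l a b\<close> is the coefficient of \<open>Z\<^sup>a A Z\<^sup>b\<close> in
  \<open>\<Sum>\<^sub>n l n ad\<^sub>Z\<^sup>n A\<close>, and \<^term>\<open>exp_left_coeff c\<close> is the coefficient table of
  \<open>exp Z \<cdot> \<Sum>\<^sub>a\<^sub>,\<^sub>b c a b Z\<^sup>a A Z\<^sup>b\<close>.\<close>

definition ad_coeff :: "(nat \<Rightarrow> 'k::field_char_0) \<Rightarrow> nat \<Rightarrow> nat \<Rightarrow> 'k" where
  "ad_coeff l a b = l (a + b) * ((-1) ^ b * of_nat ((a + b) choose a))"

definition exp_left_coeff :: "(nat \<Rightarrow> nat \<Rightarrow> 'k::field_char_0) \<Rightarrow> nat \<Rightarrow> nat \<Rightarrow> 'k" where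
  "exp_left_coeff c a b = (\<Sum>p\<le>a. c (a - p) b * inverse (fact p))"

lemma neg_one_power_add_cancel: "(-1 :: 'a::comm_ring_1) ^ (k + b) * (-1) ^ b = (-1) ^ k"
  by (simp add: power_add mult.assoc)

lemma exp_left_coeff_ad_exp_neg:
  "exp_left_coeff (ad_coeff exp_neg_coeff) a b = (if a = 0 then inverse (fact b) else (0::'k::field_char_0))"
proof -
  have coeff: "ad_coeff exp_neg_coeff k b = ((-1) ^ k / (fact k * fact b) :: 'k)" for k
  proof -
    have "ad_coeff exp_neg_coeff k b
        = ((-1) ^ (k + b) * (-1) ^ b) * (of_nat ((k + b) choose k) / fact (k + b) :: 'k)"
      by (simp add: ad_coeff_def exp_neg_coeff_def field_simps)
    also have "of_nat ((k + b) choose k) / fact (k + b) = (1 / (fact k * fact b) :: 'k)"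
      using binomial_fact[of k "k + b"] by (simp add: field_simps)
    finally show ?thesis
      by (simp add: neg_one_power_add_cancel)
  qed
  have "exp_left_coeff (ad_coeff exp_neg_coeff) a b
      = (\<Sum>p\<le>a. of_nat (a choose p) * (-1) ^ (a - p)) / (fact a * fact b :: 'k)"
    unfolding exp_left_coeff_def coeff sum_divide_distrib
  proof (rule sum.cong[OF refl])
    fix p assume "p \<in> {..a}"
    then have "of_nat (a choose p) = (fact a / (fact p * fact (a - p)) :: 'k)"
      by (simp add: binomial_fact)
    then show "(-1) ^ (a - p) / (fact (a - p) * fact b) * inverse (fact p)
        = of_nat (a choose p) * (-1) ^ (a - p) / (fact a * fact b :: 'k)"
      by (simp add: field_simps)
  qed
  also have "(\<Sum>p\<le>a. of_nat (a choose p) * (-1) ^ (a - p)) = ((1 + (-1)) ^ a :: 'k)"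
    using binomial_ring[of "1::'k" "-1" a] by simp
  finally show ?thesis
    by (cases "a = 0") (simp_all add: inverse_eq_divide)
qed

lemma ad_coeff_dexp_mult_inverse_fact:
  assumes "k \<le> a"
  shows "ad_coeff dexp_coeff k b * inverse (fact (a - k))
    = ((- of_nat (b + 1)) gchoose k) * (of_nat (a + b + 1) gchoose (a - k)) / (fact (a + b + 1) :: 'k::field_char_0)"
proof -
  have "(- of_nat (b + 1) gchoose k) = ((-1) ^ k * ((of_nat k - (- of_nat (b + 1)) - 1) gchoose k) :: 'k)"
    by (rule gbinomial_negated_upper)
  also have "of_nat k - (- of_nat (b + 1)) - 1 = (of_nat (k + b) :: 'k)"
    by simp
  finally have upper: "(- of_nat (b + 1) gchoose k) = ((-1) ^ k * of_nat ((k + b) choose k) :: 'k)"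
    by (simp add: binomial_gbinomial)
  have "(of_nat (a + b + 1) gchoose (a - k) :: 'k) = of_nat ((a + b + 1) choose (a - k))"
    by (rule binomial_gbinomial[symmetric])
  also have "\<dots> = fact (a + b + 1) / (fact (a - k) * fact (a + b + 1 - (a - k)))"
    by (rule binomial_fact) simp
  also have "a + b + 1 - (a - k) = k + b + 1"
    using assms by simp
  finally have lower: "(of_nat (a + b + 1) gchoose (a - k) :: 'k)
      = fact (a + b + 1) / (fact (a - k) * fact (k + b + 1))" .
  have coeff: "ad_coeff dexp_coeff k b = ((-1) ^ k * of_nat ((k + b) choose k)) / (fact (k + b + 1) :: 'k)"
    using neg_one_power_add_cancel[of k b, where 'a='k]
    by (simp add: ad_coeff_def dexp_coeff_def field_simps)
  have field: "x / z * inverse y = x * (w / (y * z)) / w"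
    if "w \<noteq> 0" "y \<noteq> 0" "z \<noteq> 0" for x y z w :: 'k
    using that by (simp add: field_simps)
  show ?thesis
    unfolding upper lower coeff by (rule field) (rule fact_nonzero)+
qed

text \<open>The Chu--Vandermonde identity for the upper argument \<open>-(b + 1)\<close> does the work.\<close>

lemma exp_left_coeff_ad_dexp:
  "exp_left_coeff (ad_coeff dexp_coeff) a b = (inverse (fact (a + b + 1)) :: 'k::field_char_0)"
proof -
  have "exp_left_coeff (ad_coeff dexp_coeff) a b = (\<Sum>k\<le>a. ad_coeff dexp_coeff k b * inverse (fact (a - k)) :: 'k)"
    unfolding exp_left_coeff_def atMost_atLeast0
    by (subst sum.atLeastAtMost_rev) simp
  also have "\<dots> = (\<Sum>k\<le>a. (- of_nat (b + 1) gchoose k) * (of_nat (a + b + 1) gchoose (a - k))) / fact (a + b + 1)"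
    by (simp add: ad_coeff_dexp_mult_inverse_fact sum_divide_distrib)
  also have "(\<Sum>k\<le>a. (- of_nat (b + 1) gchoose k) * (of_nat (a + b + 1) gchoose (a - k))) = (of_nat a gchoose a :: 'k)"
    using gbinomial_Vandermonde[of "- of_nat (b + 1) :: 'k" "of_nat (a + b + 1)" a]
    by (simp add: atLeast0AtMost)
  also have "(of_nat a gchoose a :: 'k) = 1"
    by (simp flip: binomial_gbinomial)
  finally show ?thesis
    by (simp add: divide_inverse)
qed


section \<open>Truncation calculus for power series in two variables\<close>

text \<open>Power series in the commuting variables \<open>s, t\<close> are modelled as \<^typ>\<open>'a fps fps\<close>,
  the coefficient of \<open>s\<^sup>i t\<^sup>j\<close> being \<open>F $ i $ j\<close>.\<close>

lemma fps2_mult_nth: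
  "((F::'a::ring_1 fps fps) * G) $ i $ j = (\<Sum>p\<le>i. \<Sum>q\<le>j. F $ p $ q * G $ (i - p) $ (j - q))"
  by (simp add: fps_mult_nth fps_sum_nth atLeast0AtMost)

definition vanishes_below :: "nat \<Rightarrow> 'a::ring_1 fps fps \<Rightarrow> bool" where
  "vanishes_below d F \<longleftrightarrow> (\<forall>i j. i + j < d \<longrightarrow> F $ i $ j = 0)"

lemma vanishes_below_0 [simp]: "vanishes_below 0 F"
  by (simp add: vanishes_below_def)

lemma vanishes_below_zero [simp]: "vanishes_below d 0"
  by (simp add: vanishes_below_def)

lemma vanishes_below_Suc_0_iff [simp]: "vanishes_below (Suc 0) F \<longleftrightarrow> F $ 0 $ 0 = 0"
  by (simp add: vanishes_below_def)

lemma vanishes_below_nth: "vanishes_below d F \<Longrightarrow> i + j < d \<Longrightarrow> F $ i $ j = 0"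
  by (simp add: vanishes_below_def)

lemma vanishes_below_mono: "d \<le> e \<Longrightarrow> vanishes_below e F \<Longrightarrow> vanishes_below d F"
  by (auto simp: vanishes_below_def)

lemma vanishes_below_add: "vanishes_below d F \<Longrightarrow> vanishes_below d G \<Longrightarrow> vanishes_below d (F + G)"
  by (simp add: vanishes_below_def)

lemma vanishes_below_uminus: "vanishes_below d F \<Longrightarrow> vanishes_below d (- F)"
  by (simp add: vanishes_below_def)

lemma vanishes_below_diff: "vanishes_below d F \<Longrightarrow> vanishes_below d G \<Longrightarrow> vanishes_below d (F - G)"
  by (simp add: vanishes_below_def fps_sub_nth)

lemma vanishes_below_sum: "(\<And>x. x \<in> S \<Longrightarrow> vanishes_below d (f x)) \<Longrightarrow> vanishes_below d (sum f S)"
  by (induct S rule: infinite_finite_induct) (auto intro: vanishes_below_add)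

lemma vanishes_below_mult:
  assumes "vanishes_below d F" "vanishes_below e G"
  shows "vanishes_below (d + e) (F * G)"
  unfolding vanishes_below_def
proof (intro allI impI)
  fix i j assume ij: "i + j < d + e"
  have "F $ p $ q * G $ (i - p) $ (j - q) = 0" if "p \<le> i" "q \<le> j" for p q
  proof (cases "p + q < d")
    case True
    then show ?thesis using assms(1) by (simp add: vanishes_below_def)
  next
    case False
    then have "(i - p) + (j - q) < e" using ij that by linarith
    then show ?thesis using assms(2) by (simp add: vanishes_below_def)
  qed
  then show "(F * G) $ i $ j = 0"
    by (simp add: fps2_mult_nth)
qed

lemma vanishes_below_mult_left: "vanishes_below d G \<Longrightarrow> vanishes_below d (F * G)"
  using vanishes_below_mult[of 0 F d G] by simp

lemma vanishes_below_mult_right: "vanishes_below d F \<Longrightarrow> vanishes_below d (F * G)"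
  using vanishes_below_mult[of d F 0 G] by simp

lemma vanishes_below_power: "vanishes_below 1 F \<Longrightarrow> vanishes_below n (F ^ n)"
proof (induct n)
  case (Suc n)
  then show ?case
    using vanishes_below_mult[of 1 F n "F ^ n"] by simp
qed simp

definition eq_below :: "nat \<Rightarrow> 'a::ring_1 fps fps \<Rightarrow> 'a fps fps \<Rightarrow> bool" where
  "eq_below d F G \<longleftrightarrow> vanishes_below d (F - G)"

lemma eq_below_refl [simp]: "eq_below d F F"
  by (simp add: eq_below_def)

lemma eq_below_sym: "eq_below d F G \<Longrightarrow> eq_below d G F"
  unfolding eq_below_def using vanishes_below_uminus by fastforce

lemma eq_below_trans: "eq_below d F G \<Longrightarrow> eq_below d G H \<Longrightarrow> eq_below d F H"
  unfolding eq_below_def using vanishes_below_add by fastforce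

lemma eq_below_mono: "d \<le> e \<Longrightarrow> eq_below e F G \<Longrightarrow> eq_below d F G"
  unfolding eq_below_def using vanishes_below_mono by blast

lemma eq_below_Suc_mono: "eq_below (Suc d) F G \<Longrightarrow> eq_below d F G"
  by (rule eq_below_mono[of d "Suc d"]) simp

lemma vanishes_below_iff_eq_below_zero: "vanishes_below d F \<longleftrightarrow> eq_below d F 0"
  by (simp add: eq_below_def)

lemma eq_below_add: "eq_below d F F' \<Longrightarrow> eq_below d G G' \<Longrightarrow> eq_below d (F + G) (F' + G')"
  unfolding eq_below_def using vanishes_below_add by (fastforce simp: algebra_simps)

lemma eq_below_diff: "eq_below d F F' \<Longrightarrow> eq_below d G G' \<Longrightarrow> eq_below d (F - G) (F' - G')"
  unfolding eq_below_def using vanishes_below_diff by (fastforce simp: algebra_simps)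

lemma eq_below_sum: "(\<And>x. x \<in> S \<Longrightarrow> eq_below d (f x) (g x)) \<Longrightarrow> eq_below d (sum f S) (sum g S)"
  by (induct S rule: infinite_finite_induct) (auto intro: eq_below_add)

lemma eq_below_mult_order:
  assumes "eq_below d F F'" "eq_below e G G'" "vanishes_below a F'" "vanishes_below b G"
  shows "eq_below (min (d + b) (a + e)) (F * G) (F' * G')"
proof -
  let ?m = "min (d + b) (a + e)"
  have "vanishes_below ?m ((F - F') * G)"
    using assms(1,4) vanishes_below_mult vanishes_below_mono[OF min.cobounded1]
    unfolding eq_below_def by blast
  moreover have "vanishes_below ?m (F' * (G - G'))"
    using assms(2,3) vanishes_below_mult vanishes_below_mono[OF min.cobounded2]
    unfolding eq_below_def by blast
  moreover have "F * G - F' * G' = (F - F') * G + F' * (G - G')"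
    by (simp add: algebra_simps)
  ultimately show ?thesis
    unfolding eq_below_def by (simp add: vanishes_below_add)
qed

lemma eq_below_mult: "eq_below d F F' \<Longrightarrow> eq_below d G G' \<Longrightarrow> eq_below d (F * G) (F' * G')"
  using eq_below_mult_order[of d F F' d G G' 0 0] by simp

lemma eq_below_power: "eq_below d F F' \<Longrightarrow> eq_below d (F ^ n) (F' ^ n)"
  by (induct n) (simp_all add: eq_below_mult)

lemma eq_below_power_gain:
  assumes "eq_below d F F'" "vanishes_below 1 F" "vanishes_below 1 F'" "n \<ge> 1"
  shows "eq_below (d + n - 1) (F ^ n) (F' ^ n)"
  using assms(4)
proof (induct n)
  case (Suc n)
  show ?case
  proof (cases "n = 0")
    case True
    then show ?thesis using assms(1) by simp
  next
    case False
    then have "eq_below (d + n - 1) (F ^ n) (F' ^ n)"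
      using Suc by simp
    from eq_below_mult_order[OF assms(1) this assms(3) vanishes_below_power[OF assms(2)]]
    have "eq_below (min (d + n) (1 + (d + n - 1))) (F ^ Suc n) (F' ^ Suc n)"
      by simp
    moreover have "min (d + n) (1 + (d + n - 1)) = d + Suc n - 1"
      using False by simp
    ultimately show ?thesis
      by simp
  qed
qed simp

lemma eq_below_nth: "eq_below d F G \<Longrightarrow> i + j < d \<Longrightarrow> F $ i $ j = G $ i $ j"
  unfolding eq_below_def vanishes_below_def by (simp add: fps_sub_nth)

lemma eq_below_eqI: "(\<And>d. eq_below d F G) \<Longrightarrow> F = G"
  by (rule fps_ext, rule fps_ext) (metis eq_below_nth less_add_Suc1)

lemma eq_below_stable_seq:
  assumes "\<And>k. eq_below (Suc k) (s (Suc k)) (s k)"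
  shows "k \<le> m \<Longrightarrow> eq_below (Suc k) (s m) (s k)"
proof (induct m)
  case (Suc m)
  show ?case
  proof (cases "k = Suc m")
    case False
    then have "eq_below (Suc k) (s m) (s k)" "eq_below (Suc k) (s (Suc m)) (s m)"
      using Suc eq_below_mono[OF _ assms[of m], of "Suc k"] by simp_all
    then show ?thesis using eq_below_trans by blast
  qed simp
qed simp

definition stable_limit :: "(nat \<Rightarrow> 'a::ring_1 fps fps) \<Rightarrow> 'a fps fps" where
  "stable_limit s = Abs_fps (\<lambda>i. Abs_fps (\<lambda>j. s (i + j) $ i $ j))"

lemma eq_below_stable_limit:
  assumes "\<And>k. eq_below (Suc k) (s (Suc k)) (s k)"
  shows "eq_below (Suc k) (stable_limit s) (s k)"
  unfolding eq_below_def vanishes_below_def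
proof (intro allI impI)
  fix i j assume "i + j < Suc k"
  then have "s k $ i $ j = s (i + j) $ i $ j"
    using eq_below_nth[OF eq_below_stable_seq[OF assms]] by simp
  then show "(stable_limit s - s k) $ i $ j = 0"
    by (simp add: stable_limit_def fps_sub_nth)
qed


section \<open>Graded sums\<close>

text \<open>The sum of a sequence whose \<open>n\<close>-th term vanishes below degree \<open>n\<close>: only the
  terms with \<open>n \<le> i + j\<close> contribute to the coefficient of \<open>s\<^sup>i t\<^sup>j\<close>.\<close>

definition graded_sum :: "(nat \<Rightarrow> 'a::ring_1 fps fps) \<Rightarrow> 'a fps fps" where
  "graded_sum f = Abs_fps (\<lambda>i. Abs_fps (\<lambda>j. (\<Sum>n\<le>i + j. f n) $ i $ j))"

lemma graded_sum_nth: "graded_sum f $ i $ j = (\<Sum>n\<le>i + j. f n) $ i $ j"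
  by (simp add: graded_sum_def)

lemma sum_atMost_eq_if_le:
  assumes "(M::nat) \<le> M'"
  shows "(\<Sum>n\<le>M. f n) = (\<Sum>n\<le>M'. if n \<le> M then f n else 0)"
proof -
  have "{n \<in> {..M'}. n \<le> M} = {..M}"
    using assms by auto
  then show ?thesis
    using sum.inter_filter[of "{..M'}" f "\<lambda>n. n \<le> M"] by simp
qed

lemma sum_triangle_atMost:
  "(\<Sum>i\<le>n. \<Sum>j\<le>n - i. g i j) = (\<Sum>k\<le>(n::nat). \<Sum>i\<le>k. g i (k - i))"
proof -
  have "(\<Sum>i\<le>n. \<Sum>j\<le>n - i. g i j) = (\<Sum>(i, j)\<in>Sigma {..n} (\<lambda>i. {..n - i}). g i j)"
    by (rule sum.Sigma) auto
  also have "Sigma {..n} (\<lambda>i. {..n - i}) = {(i, j). i + j \<le> n}"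
    by auto
  finally show ?thesis
    by (simp add: sum.triangle_reindex_eq)
qed

lemma graded_sum_nth_eq:
  assumes "\<And>n. vanishes_below n (f n)" "i + j \<le> M"
  shows "graded_sum f $ i $ j = (\<Sum>n\<le>M. f n) $ i $ j"
proof -
  have "(\<Sum>n\<le>M. f n) $ i $ j = (\<Sum>n\<le>M. if n \<le> i + j then f n else 0) $ i $ j"
    using assms(1) by (auto simp: fps_sum_nth vanishes_below_def intro!: sum.cong)
  then show ?thesis
    using sum_atMost_eq_if_le[OF assms(2), of f] by (simp add: graded_sum_nth)
qed

lemma eq_below_graded_sum:
  assumes "\<And>n. vanishes_below n (f n)"
  shows "eq_below (Suc M) (graded_sum f) (\<Sum>n\<le>M. f n)"
  unfolding eq_below_def vanishes_below_def
  using graded_sum_nth_eq[OF assms] by (simp add: fps_sub_nth)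

lemma graded_sum_eq_below: "(\<And>n. eq_below d (f n) (g n)) \<Longrightarrow> eq_below d (graded_sum f) (graded_sum g)"
  unfolding eq_below_def vanishes_below_def
  by (auto simp: fps_sub_nth graded_sum_nth fps_sum_nth sum_subtractf[symmetric])

lemma graded_sum_diff: "graded_sum f - graded_sum g = graded_sum (\<lambda>n. f n - g n)"
  by (rule fps_ext, rule fps_ext) (simp add: graded_sum_nth fps_sub_nth fps_sum_nth sum_subtractf)

lemma graded_sum_single: "vanishes_below k F \<Longrightarrow> graded_sum (\<lambda>n. if n = k then F else 0) = F"
  by (rule fps_ext, rule fps_ext) (auto simp: graded_sum_nth vanishes_below_def)

lemma graded_sum_shift:
  assumes "f 0 = 0" "\<And>n. vanishes_below n (f n)"
  shows "graded_sum f = graded_sum (\<lambda>n. f (Suc n))"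
proof (rule fps_ext, rule fps_ext)
  fix i j
  have "f (Suc (i + j)) $ i $ j = 0"
    using assms(2)[of "Suc (i + j)"] by (simp add: vanishes_below_def)
  moreover have "(\<Sum>n\<le>i + j. f (Suc n)) = (\<Sum>n\<le>i + j. f n) + f (Suc (i + j))"
    using sum.atMost_Suc_shift[of f "i + j"] sum.atMost_Suc[of f "i + j"] assms(1) by simp
  ultimately show "graded_sum f $ i $ j = graded_sum (\<lambda>n. f (Suc n)) $ i $ j"
    unfolding graded_sum_nth by simp
qed

lemma graded_sum_mult:
  assumes f: "\<And>n. vanishes_below n (f n)" and g: "\<And>n. vanishes_below n (g n)"
  shows "graded_sum f * graded_sum g = graded_sum (\<lambda>n. \<Sum>k\<le>n. f k * g (n - k))"
proof (rule eq_below_eqI)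
  fix d
  have fg: "vanishes_below n (\<Sum>k\<le>n. f k * g (n - k))" for n
  proof (rule vanishes_below_sum)
    fix k assume "k \<in> {..n}"
    then show "vanishes_below n (f k * g (n - k))"
      using vanishes_below_mult[OF f g, of k "n - k"] by simp
  qed
  have "eq_below (Suc d) (f k * g m) (if m \<le> d - k then f k * g m else 0)" if "k \<le> d" for k m
  proof (cases "m \<le> d - k")
    case False
    then have "Suc d \<le> k + m"
      using that by linarith
    then have "vanishes_below (Suc d) (f k * g m)"
      using vanishes_below_mono vanishes_below_mult[OF f g, of k m] by blast
    then show ?thesis
      using False by (simp add: vanishes_below_iff_eq_below_zero)
  qed simp
  then have truncate: "eq_below (Suc d) (\<Sum>k\<le>d. \<Sum>m\<le>d. f k * g m)
      (\<Sum>k\<le>d. \<Sum>m\<le>d. if m \<le> d - k then f k * g m else 0)"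
    by (intro eq_below_sum) simp
  have reindex: "(\<Sum>k\<le>d. \<Sum>m\<le>d. if m \<le> d - k then f k * g m else 0)
      = (\<Sum>n\<le>d. \<Sum>k\<le>n. f k * g (n - k))"
    by (simp add: sum_atMost_eq_if_le[symmetric] sum_triangle_atMost)
  have "eq_below (Suc d) (graded_sum f * graded_sum g) ((\<Sum>k\<le>d. f k) * (\<Sum>m\<le>d. g m))"
    by (intro eq_below_mult eq_below_graded_sum f g)
  from eq_below_trans[OF this[unfolded sum_product] truncate]
  have "eq_below (Suc d) (graded_sum f * graded_sum g) (\<Sum>n\<le>d. \<Sum>k\<le>n. f k * g (n - k))"
    unfolding reindex .
  from eq_below_trans[OF this eq_below_sym[OF eq_below_graded_sum[OF fg]]]
  show "eq_below d (graded_sum f * graded_sum g) (graded_sum (\<lambda>n. \<Sum>k\<le>n. f k * g (n - k)))"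
    by (rule eq_below_Suc_mono)
qed


section \<open>The Euler derivation\<close>

text \<open>\<open>s \<partial>\<^sub>s + t \<partial>\<^sub>t\<close>: it multiplies the coefficient of \<open>s\<^sup>i t\<^sup>j\<close> by the total degree \<open>i + j\<close>.\<close>

definition euler :: "'a::ring_1 fps fps \<Rightarrow> 'a fps fps" where
  "euler F = Abs_fps (\<lambda>i. Abs_fps (\<lambda>j. of_nat (i + j) * F $ i $ j))"

lemma euler_nth [simp]: "euler F $ i $ j = of_nat (i + j) * F $ i $ j"
  by (simp add: euler_def)

lemma euler_diff: "euler (F - G) = euler F - euler G"
  by (rule fps_ext, rule fps_ext) (simp add: fps_sub_nth algebra_simps)

lemma euler_one [simp]: "euler 1 = 0"
  by (rule fps_ext, rule fps_ext) simp

lemma euler_vanishes_below_1: "vanishes_below 1 (euler F)"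
  by (simp add: vanishes_below_def)

lemma euler_vanishes_below: "vanishes_below d F \<Longrightarrow> vanishes_below d (euler F)"
  by (simp add: vanishes_below_def)

lemma eq_below_euler: "eq_below d F G \<Longrightarrow> eq_below d (euler F) (euler G)"
  by (simp add: eq_below_def euler_vanishes_below flip: euler_diff)

lemma euler_graded_sum: "euler (graded_sum f) = graded_sum (\<lambda>n. euler (f n))"
  by (rule fps_ext, rule fps_ext) (simp add: graded_sum_nth fps_sum_nth sum_distrib_left)

lemma euler_mult: "euler (F * G) = euler F * G + F * euler G"
proof (rule fps_ext, rule fps_ext)
  fix i j
  have "of_nat (i + j) * (F $ p $ q * G $ (i - p) $ (j - q))
      = of_nat (p + q) * F $ p $ q * G $ (i - p) $ (j - q)
        + F $ p $ q * (of_nat (i - p + (j - q)) * G $ (i - p) $ (j - q))"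
    if "p \<le> i" "q \<le> j" for p q
  proof -
    have "of_nat (i + j) = (of_nat (p + q) + of_nat (i - p + (j - q)) :: 'a)"
      using that by (simp flip: of_nat_add)
    then show ?thesis
      by (simp add: algebra_simps mult_of_nat_commute)
  qed
  then show "euler (F * G) $ i $ j = (euler F * G + F * euler G) $ i $ j"
    by (simp add: fps2_mult_nth sum_distrib_left sum.distrib[symmetric] mult.assoc)
qed

lemma euler_power: "euler (W ^ Suc n) = (\<Sum>a\<le>n. W ^ a * euler W * W ^ (n - a))"
proof (induct n)
  case (Suc n)
  have "euler (W ^ Suc (Suc n)) = euler W * W ^ Suc n + (\<Sum>a\<le>n. W ^ Suc a * euler W * W ^ (n - a))"
    using Suc by (simp add: euler_mult sum_distrib_left mult.assoc)
  also have "\<dots> = (\<Sum>a\<le>Suc n. W ^ a * euler W * W ^ (Suc n - a))"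
    by (subst sum.atMost_Suc_shift) simp
  finally show ?case .
qed simp


section \<open>Exponential, logarithm and BCH series\<close>

locale k_algebra =
  fixes sc :: "'k::field_char_0 \<Rightarrow> 'a::ring_1 \<Rightarrow> 'a"
  assumes kalg: "kalg sc"
begin

definition scal :: "'k \<Rightarrow> 'a" where
  "scal c = sc c 1"

lemma sc_eq_scal_mult: "sc c x = scal c * x"
  using kalg unfolding kalg_def scal_def by (metis mult_1_left)

lemma scal_central: "scal c * x = x * scal c"
  using kalg unfolding kalg_def by (metis sc_eq_scal_mult mult_1_left mult_1_right)

lemma scal_add: "scal (a + b) = scal a + scal b"
  using kalg unfolding kalg_def scal_def by blast

lemma scal_mult: "scal (a * b) = scal a * scal b"
  using kalg unfolding kalg_def by (metis sc_eq_scal_mult scal_def)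

lemma scal_one [simp]: "scal 1 = 1"
  using kalg unfolding kalg_def scal_def by blast

lemma scal_zero [simp]: "scal 0 = 0"
  using scal_add[of 0 0] by simp

lemma scal_diff: "scal (a - b) = scal a - scal b"
proof -
  have "scal (- b) = - scal b"
    by (rule minus_unique[symmetric]) (simp flip: scal_add)
  then show ?thesis
    using scal_add[of a "- b"] by simp
qed

lemma scal_uminus: "scal (- a) = - scal a"
  using scal_diff[of 0 a] by simp

lemma scal_of_nat [simp]: "scal (of_nat n) = of_nat n"
  by (induct n) (simp_all add: scal_add)

lemma scal_inverse_of_nat: "n > 0 \<Longrightarrow> scal (inverse (of_nat n)) * of_nat n = 1"
proof -
  assume "n > 0"
  then have "inverse (of_nat n :: 'k) * of_nat n = 1"
    by simp
  then show ?thesis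
    by (metis scal_mult scal_of_nat scal_one)
qed

definition scal2 :: "'k \<Rightarrow> 'a fps fps" where
  "scal2 c = fps_const (fps_const (scal c))"

lemma scal2_mult_nth [simp]: "(scal2 c * F) $ i $ j = scal c * F $ i $ j"
  by (simp add: scal2_def)

lemma scal2_central: "scal2 c * F = F * scal2 c"
  by (rule fps_ext, rule fps_ext) (simp add: scal2_def scal_central)

lemma scal2_mult_commute: "scal2 c * (F * G) = F * (scal2 c * G)"
  by (metis scal2_central mult.assoc)

lemma scal2_mult: "scal2 (a * b) = scal2 a * scal2 b"
  by (simp add: scal2_def scal_mult)

lemma scal2_mult_assoc: "scal2 a * (scal2 b * F) = scal2 (a * b) * F"
  by (simp add: scal2_mult mult.assoc)

lemma scal2_mult_mult: "(scal2 u * P) * (scal2 v * X) = scal2 (u * v) * (P * X)"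
  by (simp only: mult.assoc scal2_mult_commute[of v P X, symmetric] scal2_mult_assoc)

lemma scal2_one [simp]: "scal2 1 = 1"
  by (simp add: scal2_def)

lemma scal2_zero [simp]: "scal2 0 = 0"
  by (simp add: scal2_def)

lemma scal2_add: "scal2 (a + b) = scal2 a + scal2 b"
  by (simp add: scal2_def scal_add)

lemma scal2_diff: "scal2 (a - b) = scal2 a - scal2 b"
  by (simp add: scal2_def scal_diff)

lemma scal2_sum: "scal2 (sum f S) = (\<Sum>x\<in>S. scal2 (f x))"
  by (induct S rule: infinite_finite_induct) (simp_all add: scal2_add)

definition fps2_exp :: "'a fps fps \<Rightarrow> 'a fps fps" where
  "fps2_exp W = graded_sum (\<lambda>n. scal2 (inverse (fact n)) * W ^ n)"

lemma exp_term_vanishes_below: "vanishes_below 1 W \<Longrightarrow> vanishes_below n (scal2 c * W ^ n)"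
  by (simp add: vanishes_below_mult_left vanishes_below_power)

lemma fps2_exp_zero [simp]: "fps2_exp 0 = 1"
proof -
  have "(\<lambda>n. scal2 (inverse (fact n)) * (0::'a fps fps) ^ n) = (\<lambda>n. if n = 0 then 1 else 0)"
    by (auto simp: zero_power)
  then show ?thesis
    using graded_sum_single[of 0 1] by (simp add: fps2_exp_def)
qed

lemma fps2_exp_nth_00 [simp]: "fps2_exp W $ 0 $ 0 = 1"
  by (simp add: fps2_exp_def graded_sum_nth)

lemma eq_below_fps2_exp: "eq_below d W W' \<Longrightarrow> eq_below d (fps2_exp W) (fps2_exp W')"
  unfolding fps2_exp_def by (intro graded_sum_eq_below eq_below_mult eq_below_refl eq_below_power)

lemma eq_below_fps2_exp_minus:
  assumes "vanishes_below 1 W" "vanishes_below 1 W'" "eq_below d W W'"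
  shows "eq_below (Suc d) (fps2_exp W - W) (fps2_exp W' - W')"
proof -
  have split: "fps2_exp V - V = graded_sum (\<lambda>n. scal2 (inverse (fact n)) * V ^ n - (if n = 1 then V else 0))"
    if "vanishes_below 1 V" for V
    using graded_sum_diff[of "\<lambda>n. scal2 (inverse (fact n)) * V ^ n" "\<lambda>n. if n = 1 then V else 0"]
      graded_sum_single[OF that]
    by (simp add: fps2_exp_def)
  have "eq_below (Suc d) (scal2 (inverse (fact n)) * W ^ n - (if n = 1 then W else 0))
      (scal2 (inverse (fact n)) * W' ^ n - (if n = 1 then W' else 0))" for n
  proof (cases "n \<le> 1")
    case True
    then consider "n = 0" | "n = 1" by linarith
    then show ?thesis by cases simp_all
  next
    case False
    then have "eq_below (d + n - 1) (W ^ n) (W' ^ n)"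
      using eq_below_power_gain[OF assms(3,1,2)] by simp
    then have "eq_below (Suc d) (W ^ n) (W' ^ n)"
      by (rule eq_below_mono[rotated]) (use False in simp)
    then show ?thesis
      using False by (simp add: eq_below_mult)
  qed
  then show ?thesis
    unfolding split[OF assms(1)] split[OF assms(2)] by (rule graded_sum_eq_below)
qed

lemma eq_below_fps2_exp_mult:
  assumes "vanishes_below 1 X" "vanishes_below 1 X'" "vanishes_below 1 Y" "vanishes_below 1 Y'"
    and "eq_below d X X'" "eq_below d Y Y'"
  shows "eq_below (Suc d) (fps2_exp X * fps2_exp Y - X - Y) (fps2_exp X' * fps2_exp Y' - X' - Y')"
proof -
  define X2 X2' Y2 Y2' where "X2 = fps2_exp X - 1 - X" and "X2' = fps2_exp X' - 1 - X'"
    and "Y2 = fps2_exp Y - 1 - Y" and "Y2' = fps2_exp Y' - 1 - Y'"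
  have X2: "eq_below (Suc d) X2 X2'" and Y2: "eq_below (Suc d) Y2 Y2'"
    unfolding X2_def X2'_def Y2_def Y2'_def
    using eq_below_diff[OF eq_below_fps2_exp_minus[OF assms(1,2,5)] eq_below_refl[of _ 1]]
      eq_below_diff[OF eq_below_fps2_exp_minus[OF assms(3,4,6)] eq_below_refl[of _ 1]]
    by (simp_all add: algebra_simps)
  have "eq_below d (X + X2) (X' + X2')" "eq_below d (Y + Y2) (Y' + Y2')"
    using X2 Y2 assms(5,6) by (simp_all add: eq_below_add eq_below_Suc_mono)
  moreover have "vanishes_below 1 (X' + X2')" "vanishes_below 1 (Y + Y2)"
    using assms by (simp_all add: X2'_def Y2_def fps_sub_nth)
  ultimately have "eq_below (min (d + 1) (1 + d)) ((X + X2) * (Y + Y2)) ((X' + X2') * (Y' + Y2'))"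
    by (intro eq_below_mult_order)
  then have "eq_below (Suc d) (1 + X2 + Y2 + (X + X2) * (Y + Y2)) (1 + X2' + Y2' + (X' + X2') * (Y' + Y2'))"
    using X2 Y2 by (simp add: eq_below_add)
  moreover have "fps2_exp X * fps2_exp Y - X - Y = 1 + X2 + Y2 + (X + X2) * (Y + Y2)"
    "fps2_exp X' * fps2_exp Y' - X' - Y' = 1 + X2' + Y2' + (X' + X2') * (Y' + Y2')"
    unfolding X2_def X2'_def Y2_def Y2'_def by (simp_all add: algebra_simps)
  ultimately show ?thesis
    by simp
qed

definition is_bch :: "'a fps fps \<Rightarrow> 'a fps fps \<Rightarrow> 'a fps fps \<Rightarrow> bool" where
  "is_bch X Y Z \<longleftrightarrow> Z $ 0 $ 0 = 0 \<and> fps2_exp X * fps2_exp Y = fps2_exp (X + Y + Z)"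

text \<open>Writing \<open>Z = (exp X exp Y - X - Y) - (exp W - W)\<close> with \<open>W = X + Y + Z\<close>, agreement of
  \<open>Z\<close> below \<open>e\<close> improves to agreement below \<open>e + 1\<close>, up to \<open>d + 1\<close>.\<close>

lemma is_bch_eq_below:
  assumes X: "vanishes_below 1 X" "vanishes_below 1 X'" and Y: "vanishes_below 1 Y" "vanishes_below 1 Y'"
    and "eq_below d X X'" "eq_below d Y Y'" and Z: "is_bch X Y Z" "is_bch X' Y' Z'"
  shows "eq_below (Suc d) Z Z'"
proof -
  have "e \<le> Suc d \<Longrightarrow> eq_below e Z Z'" for e
  proof (induct e)
    case (Suc e)
    then have "eq_below e Z Z'" and "e \<le> d"
      by auto
    then have XY: "eq_below e X X'" "eq_below e Y Y'"
      using eq_below_mono[of e d] assms(5,6) by simp_all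
    then have W: "eq_below e (X + Y + Z) (X' + Y' + Z')"
      using \<open>eq_below e Z Z'\<close> by (intro eq_below_add)
    have "vanishes_below 1 (X + Y + Z)" "vanishes_below 1 (X' + Y' + Z')"
      using X Y Z by (simp_all add: is_bch_def)
    from eq_below_fps2_exp_minus[OF this W] eq_below_fps2_exp_mult[OF X Y XY]
    have "eq_below (Suc e) ((fps2_exp X * fps2_exp Y - X - Y) - (fps2_exp (X + Y + Z) - (X + Y + Z)))
        ((fps2_exp X' * fps2_exp Y' - X' - Y') - (fps2_exp (X' + Y' + Z') - (X' + Y' + Z')))"
      by (rule eq_below_diff[rotated])
    then show ?case
      using Z by (simp add: is_bch_def algebra_simps)
  qed (simp add: eq_below_def)
  then show ?thesis
    by simp
qed

lemma is_bch_unique: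
  assumes "vanishes_below 1 X" "vanishes_below 1 Y" "is_bch X Y Z" "is_bch X Y Z'"
  shows "Z = Z'"
proof (rule eq_below_eqI)
  fix d
  have "eq_below (Suc d) Z Z'"
    using assms by (intro is_bch_eq_below[of X X Y Y]) simp_all
  then show "eq_below d Z Z'"
    by (rule eq_below_Suc_mono)
qed

lemma fps2_exp_inj:
  assumes "vanishes_below 1 W" "vanishes_below 1 W'" "fps2_exp W = fps2_exp W'"
  shows "W = W'"
proof -
  have "is_bch W 0 0" "is_bch W 0 (W' - W)"
    using assms by (simp_all add: is_bch_def fps_sub_nth)
  then show ?thesis
    using is_bch_unique[OF assms(1), of 0 0 "W' - W"] by simp
qed

text \<open>Each step gains one degree: \<open>exp (L + D) - exp L\<close> agrees with \<open>D\<close> one degree beyond the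
  order of \<open>D\<close>.\<close>

primrec log_approx :: "'a fps fps \<Rightarrow> nat \<Rightarrow> 'a fps fps" where
  "log_approx T 0 = 0"
| "log_approx T (Suc k) = log_approx T k + (T - fps2_exp (log_approx T k))"

lemma log_approx:
  assumes "T $ 0 $ 0 = 1"
  shows "vanishes_below 1 (log_approx T k) \<and> eq_below (Suc k) (fps2_exp (log_approx T k)) T"
proof (induct k)
  case 0
  then show ?case
    using assms by (simp add: eq_below_def vanishes_below_def fps_sub_nth)
next
  case (Suc k)
  define L where "L = log_approx T k"
  define D where "D = T - fps2_exp L"
  have L: "vanishes_below 1 L"
    using Suc by (simp add: L_def)
  have "eq_below (Suc k) T (fps2_exp L)"
    unfolding L_def using Suc by (blast intro: eq_below_sym)
  then have D: "vanishes_below (Suc k) D"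
    by (simp add: D_def eq_below_def)
  have LD: "vanishes_below 1 (L + D)"
    using L D vanishes_below_mono[of 1 "Suc k"] vanishes_below_add by simp
  have "eq_below (Suc k) (L + D) L"
    using D by (simp add: eq_below_def)
  from eq_below_add[OF eq_below_fps2_exp_minus[OF LD L this] eq_below_refl[of _ "L + D"]]
  have "eq_below (Suc (Suc k)) (fps2_exp (L + D)) T"
    by (simp add: D_def algebra_simps)
  then show ?case
    using LD by (simp add: L_def D_def)
qed

definition fps2_log :: "'a fps fps \<Rightarrow> 'a fps fps" where
  "fps2_log T = stable_limit (log_approx T)"

lemma fps2_log:
  assumes "T $ 0 $ 0 = 1"
  shows "vanishes_below 1 (fps2_log T)" "fps2_exp (fps2_log T) = T"
proof -
  have "eq_below (Suc k) (log_approx T (Suc k)) (log_approx T k)" for k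
    using eq_below_sym[OF conjunct2[OF log_approx[OF assms, of k]]] by (simp add: eq_below_def)
  then have approx: "eq_below (Suc k) (fps2_log T) (log_approx T k)" for k
    unfolding fps2_log_def by (rule eq_below_stable_limit)
  show "vanishes_below 1 (fps2_log T)"
    using eq_below_nth[OF approx[of 0]] log_approx[OF assms, of 0] by simp
  show "fps2_exp (fps2_log T) = T"
  proof (rule eq_below_eqI)
    fix d
    have "eq_below (Suc d) (fps2_exp (fps2_log T)) T"
      using eq_below_fps2_exp[OF approx[of d]] log_approx[OF assms, of d] eq_below_trans by blast
    then show "eq_below d (fps2_exp (fps2_log T)) T"
      by (rule eq_below_Suc_mono)
  qed
qed

definition fps2_bch :: "'a fps fps \<Rightarrow> 'a fps fps \<Rightarrow> 'a fps fps" where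
  "fps2_bch X Y = fps2_log (fps2_exp X * fps2_exp Y) - X - Y"

lemma is_bch_fps2_bch:
  assumes "vanishes_below 1 X" "vanishes_below 1 Y"
  shows "is_bch X Y (fps2_bch X Y)"
proof -
  have "(fps2_exp X * fps2_exp Y) $ 0 $ 0 = 1"
    by (simp add: fps2_mult_nth)
  from fps2_log[OF this] show ?thesis
    using assms by (simp add: is_bch_def fps2_bch_def fps_sub_nth)
qed

lemma fps2_bch_unique: "vanishes_below 1 X \<Longrightarrow> vanishes_below 1 Y \<Longrightarrow> is_bch X Y Z \<Longrightarrow> fps2_bch X Y = Z"
  using is_bch_unique is_bch_fps2_bch by blast

lemma fps2_bch_vanishes_below_1: "vanishes_below 1 X \<Longrightarrow> vanishes_below 1 Y \<Longrightarrow> vanishes_below 1 (fps2_bch X Y)"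
  using is_bch_fps2_bch by (simp add: is_bch_def)

lemma eq_below_fps2_bch:
  "vanishes_below 1 X \<Longrightarrow> vanishes_below 1 X' \<Longrightarrow> vanishes_below 1 Y \<Longrightarrow> vanishes_below 1 Y' \<Longrightarrow>
    eq_below d X X' \<Longrightarrow> eq_below d Y Y' \<Longrightarrow> eq_below (Suc d) (fps2_bch X Y) (fps2_bch X' Y')"
  using is_bch_eq_below is_bch_fps2_bch by blast

end


section \<open>Derivative of the exponential and the Lie property of BCH\<close>

primrec ad_power :: "'a::ring_1 fps fps \<Rightarrow> nat \<Rightarrow> 'a fps fps \<Rightarrow> 'a fps fps" where
  "ad_power Z 0 A = A"
| "ad_power Z (Suc n) A = Z * ad_power Z n A - ad_power Z n A * Z"

lemma vanishes_below_ad_power: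
  "vanishes_below 1 Z \<Longrightarrow> vanishes_below d A \<Longrightarrow> vanishes_below (d + n) (ad_power Z n A)"
proof (induct n)
  case (Suc n)
  then have "vanishes_below (d + n) (ad_power Z n A)"
    by simp
  with vanishes_below_mult[OF Suc(2) this] vanishes_below_mult[OF this Suc(2)] show ?case
    by (simp add: vanishes_below_diff add.commute)
qed simp

lemma eq_below_ad_power:
  assumes V: "vanishes_below 1 V" "vanishes_below 1 V'" and A: "vanishes_below 1 A" "vanishes_below 1 A'"
    and "eq_below d V V'" "eq_below d A A'" "n \<ge> 1"
  shows "eq_below (Suc d) (ad_power V n A) (ad_power V' n A')"
proof -
  have "eq_below d (ad_power V n A) (ad_power V' n A') \<and>
      (n \<ge> 1 \<longrightarrow> eq_below (Suc d) (ad_power V n A) (ad_power V' n A'))" for n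
  proof (induct n)
    case (Suc n)
    then have IH: "eq_below d (ad_power V n A) (ad_power V' n A')"
      by simp
    have h: "vanishes_below 1 (ad_power V n A)" "vanishes_below 1 (ad_power V' n A')"
      using vanishes_below_ad_power[OF V(1) A(1), of n] vanishes_below_ad_power[OF V(2) A(2), of n]
        vanishes_below_mono[of 1 "1 + n"] by simp_all
    have "eq_below (min (d + 1) (1 + d)) (V * ad_power V n A) (V' * ad_power V' n A')"
      "eq_below (min (d + 1) (1 + d)) (ad_power V n A * V) (ad_power V' n A' * V')"
      by (rule eq_below_mult_order[OF assms(5) IH V(2) h(1)], rule eq_below_mult_order[OF IH assms(5) h(2) V(1)])
    then have "eq_below (Suc d) (ad_power V (Suc n) A) (ad_power V' (Suc n) A')"
      by (simp add: eq_below_diff)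
    then show ?case
      by (simp add: eq_below_Suc_mono)
  qed (use assms in simp)
  then show ?thesis
    using assms(7) by blast
qed

lemma fps2_mult_nth_of_vanishes_below:
  fixes T D :: "'a::ring_1 fps fps"
  assumes "vanishes_below (i + j) D"
  shows "(T * D) $ i $ j = T $ 0 $ 0 * D $ i $ j"
proof -
  have "T $ p $ q * D $ (i - p) $ (j - q) = (if p = 0 then if q = 0 then T $ 0 $ 0 * D $ i $ j else 0 else 0)"
    if "p \<le> i" "q \<le> j" for p q
    using assms that by (auto simp: vanishes_below_def)
  then have "(T * D) $ i $ j = (\<Sum>p\<le>i. \<Sum>q\<le>j. if p = 0 then if q = 0 then T $ 0 $ 0 * D $ i $ j else 0 else 0)"
    unfolding fps2_mult_nth by (intro sum.cong refl) auto
  also have "\<dots> = (\<Sum>p\<le>i. if p = 0 then T $ 0 $ 0 * D $ i $ j else 0)"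
    by (intro sum.cong refl) simp
  also have "\<dots> = T $ 0 $ 0 * D $ i $ j"
    by simp
  finally show ?thesis .
qed

lemma fps2_mult_left_cancel:
  fixes T D D' :: "'a::ring_1 fps fps"
  assumes "T $ 0 $ 0 = 1" "T * D = T * D'"
  shows "D = D'"
proof -
  have TD: "T * (D - D') = 0"
    using assms(2) by (simp add: algebra_simps)
  have "vanishes_below d (D - D')" for d
  proof (induct d)
    case (Suc d)
    have "(D - D') $ i $ j = 0" if "i + j = d" for i j
      using fps2_mult_nth_of_vanishes_below[of i j "D - D'" T] Suc that assms(1) TD by simp
    with Suc show ?case
      by (auto simp: vanishes_below_def less_Suc_eq)
  qed simp
  then show ?thesis
    by (intro eq_below_eqI) (simp add: eq_below_def)
qed

context k_algebra
begin

lemma ad_power_expand: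
  "ad_power Z n A = (\<Sum>a\<le>n. scal2 ((-1) ^ (n - a) * of_nat (n choose a)) * (Z ^ a * A * Z ^ (n - a)))"
proof (induct n)
  case (Suc n)
  let ?c = "\<lambda>n a. ((-1) ^ (n - a) * of_nat (n choose a) :: 'k)"
  let ?T = "\<lambda>a. Z ^ a * A * Z ^ (Suc n - a)"
  have "Z * ad_power Z n A = (\<Sum>a\<le>n. scal2 (?c n a) * ?T (Suc a))"
    by (simp add: Suc sum_distrib_left scal2_mult_commute mult.assoc)
  also have "\<dots> = (\<Sum>a\<le>Suc n. scal2 (if a = 0 then 0 else ?c n (a - 1)) * ?T a)"
    by (subst sum.atMost_Suc_shift) simp
  finally have left: "Z * ad_power Z n A = \<dots>" .
  have "ad_power Z n A * Z = (\<Sum>a\<le>n. scal2 (?c n a) * ?T a)"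
    by (simp add: Suc sum_distrib_right mult.assoc power_commutes Suc_diff_le)
  also have "\<dots> = (\<Sum>a\<le>Suc n. scal2 (?c n a) * ?T a)"
    by (simp add: binomial_eq_0)
  finally have right: "ad_power Z n A * Z = \<dots>" .
  have pascal: "(if a = 0 then 0 else ?c n (a - 1)) - ?c n a = ?c (Suc n) a" for a
  proof (cases a)
    case (Suc a')
    then consider "a' = n" | "a' < n" | "a' > n"
      by linarith
    then show ?thesis
    proof cases
      case 3
      then show ?thesis using Suc by simp
    next
      case 2
      then have "n - a' = Suc (n - Suc a')"
        by simp
      then show ?thesis
        using Suc 2 by (simp add: algebra_simps)
    qed (use Suc in simp)
  qed simp
  show ?case
    unfolding ad_power.simps left right
    by (simp only: sum_subtractf[symmetric] left_diff_distrib[symmetric] scal2_diff[symmetric] pascal)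
qed simp

definition sandwich_sum :: "(nat \<Rightarrow> nat \<Rightarrow> 'k) \<Rightarrow> 'a fps fps \<Rightarrow> 'a fps fps \<Rightarrow> 'a fps fps" where
  "sandwich_sum c Z A = graded_sum (\<lambda>n. \<Sum>a\<le>n. scal2 (c a (n - a)) * (Z ^ a * A * Z ^ (n - a)))"

definition ad_series :: "(nat \<Rightarrow> 'k) \<Rightarrow> 'a fps fps \<Rightarrow> 'a fps fps \<Rightarrow> 'a fps fps" where
  "ad_series l Z A = graded_sum (\<lambda>n. scal2 (l n) * ad_power Z n A)"

lemma ad_series_eq_sandwich_sum: "ad_series l Z A = sandwich_sum (ad_coeff l) Z A"
  unfolding ad_series_def sandwich_sum_def ad_power_expand sum_distrib_left
  by (simp add: ad_coeff_def scal2_mult_assoc mult.assoc)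

lemma sandwich_term_vanishes_below:
  assumes "vanishes_below 1 Z"
  shows "vanishes_below n (\<Sum>a\<le>n. scal2 (c a (n - a)) * (Z ^ a * A * Z ^ (n - a)))"
proof (rule vanishes_below_sum)
  fix a assume "a \<in> {..n}"
  then show "vanishes_below n (scal2 (c a (n - a)) * (Z ^ a * A * Z ^ (n - a)))"
  proof -
    have "vanishes_below (a + (n - a)) (Z ^ a * A * Z ^ (n - a))"
      by (intro vanishes_below_mult vanishes_below_mult_right vanishes_below_power assms)
    then show ?thesis
      using \<open>a \<in> {..n}\<close> by (simp add: vanishes_below_mult_left)
  qed
qed

lemma fps2_exp_mult_sandwich_sum:
  assumes Z: "vanishes_below 1 Z"
  shows "fps2_exp Z * sandwich_sum c Z A = sandwich_sum (exp_left_coeff c) Z A"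
proof -
  have "fps2_exp Z * sandwich_sum c Z A = graded_sum (\<lambda>n. \<Sum>k\<le>n. (scal2 (inverse (fact k)) * Z ^ k) *
      (\<Sum>a\<le>n - k. scal2 (c a (n - k - a)) * (Z ^ a * A * Z ^ (n - k - a))))"
    unfolding fps2_exp_def sandwich_sum_def
    by (rule graded_sum_mult[OF exp_term_vanishes_below[OF Z] sandwich_term_vanishes_below[OF Z]])
  also have "\<dots> = sandwich_sum (exp_left_coeff c) Z A"
    unfolding sandwich_sum_def
  proof (rule arg_cong[where f = graded_sum], rule ext)
    fix n
    define g where "g k a = scal2 (inverse (fact k) * c a (n - k - a)) * (Z ^ (k + a) * A * Z ^ (n - (k + a)))"
      for k a
    have "(\<Sum>k\<le>n. (scal2 (inverse (fact k)) * Z ^ k) *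
        (\<Sum>a\<le>n - k. scal2 (c a (n - k - a)) * (Z ^ a * A * Z ^ (n - k - a))))
        = (\<Sum>k\<le>n. \<Sum>a\<le>n - k. g k a)"
      unfolding g_def sum_distrib_left scal2_mult_mult
      by (simp add: mult.assoc power_add diff_diff_add)
    also have "\<dots> = (\<Sum>m\<le>n. \<Sum>k\<le>m. g k (m - k))"
      by (rule sum_triangle_atMost)
    also have "\<dots> = (\<Sum>m\<le>n. scal2 (exp_left_coeff c m (n - m)) * (Z ^ m * A * Z ^ (n - m)))"
    proof (rule sum.cong[OF refl])
      fix m assume "m \<in> {..n}"
      then have "(\<Sum>k\<le>m. g k (m - k))
          = (\<Sum>k\<le>m. scal2 (c (m - k) (n - m) * inverse (fact k)) * (Z ^ m * A * Z ^ (n - m)))"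
        unfolding g_def by (intro sum.cong refl) (simp add: mult.commute)
      then show "(\<Sum>k\<le>m. g k (m - k)) = scal2 (exp_left_coeff c m (n - m)) * (Z ^ m * A * Z ^ (n - m))"
        by (simp add: exp_left_coeff_def scal2_sum sum_distrib_right)
    qed
    finally show "(\<Sum>k\<le>n. (scal2 (inverse (fact k)) * Z ^ k) *
        (\<Sum>a\<le>n - k. scal2 (c a (n - k - a)) * (Z ^ a * A * Z ^ (n - k - a))))
        = (\<Sum>a\<le>n. scal2 (exp_left_coeff c a (n - a)) * (Z ^ a * A * Z ^ (n - a)))" .
  qed
  finally show ?thesis .
qed

lemma mult_fps2_exp_eq_sandwich_sum:
  assumes Z: "vanishes_below 1 Z"
  shows "A * fps2_exp Z = sandwich_sum (\<lambda>a b. if a = 0 then inverse (fact b) else 0) Z A"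
proof -
  have "A * fps2_exp Z = graded_sum (\<lambda>n. if n = 0 then A else 0) * fps2_exp Z"
    using graded_sum_single[of 0 A] by simp
  also have "\<dots> = graded_sum (\<lambda>n. \<Sum>k\<le>n. (if k = 0 then A else 0) * (scal2 (inverse (fact (n - k))) * Z ^ (n - k)))"
    unfolding fps2_exp_def by (rule graded_sum_mult) (simp_all add: exp_term_vanishes_below[OF Z])
  also have "\<dots> = sandwich_sum (\<lambda>a b. if a = 0 then inverse (fact b) else 0) Z A"
    unfolding sandwich_sum_def
  proof (intro arg_cong[where f = graded_sum] ext)
    fix n
    have "(\<Sum>k\<le>n. (if k = 0 then A else 0) * (scal2 (inverse (fact (n - k))) * Z ^ (n - k)))
        = (\<Sum>k\<le>n. if k = 0 then A * (scal2 (inverse (fact n)) * Z ^ n) else 0)"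
      by (rule sum.cong) auto
    also have "\<dots> = A * (scal2 (inverse (fact n)) * Z ^ n)"
      by simp
    also have "\<dots> = (\<Sum>a\<le>n. if a = 0 then scal2 (inverse (fact n)) * (A * Z ^ n) else 0)"
      by (simp add: scal2_mult_commute)
    also have "\<dots> = (\<Sum>a\<le>n. scal2 (if a = 0 then inverse (fact (n - a)) else 0) * (Z ^ a * A * Z ^ (n - a)))"
      by (rule sum.cong) auto
    finally show "(\<Sum>k\<le>n. (if k = 0 then A else 0) * (scal2 (inverse (fact (n - k))) * Z ^ (n - k)))
        = (\<Sum>a\<le>n. scal2 (if a = 0 then inverse (fact (n - a)) else 0) * (Z ^ a * A * Z ^ (n - a)))" .
  qed
  finally show ?thesis .
qed

lemma euler_scal2_mult: "euler (scal2 c * F) = scal2 c * euler F"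
proof (rule fps_ext, rule fps_ext)
  fix i j
  have "of_nat (i + j) * scal c = scal c * of_nat (i + j)"
    by (rule scal_central[symmetric])
  then show "euler (scal2 c * F) $ i $ j = (scal2 c * euler F) $ i $ j"
    by (simp only: euler_nth scal2_mult_nth mult.assoc[symmetric])
qed

lemma euler_fps2_exp_eq_sandwich_sum:
  assumes Z: "vanishes_below 1 Z"
  shows "euler (fps2_exp Z) = sandwich_sum (\<lambda>a b. inverse (fact (a + b + 1))) Z (euler Z)"
proof -
  have "euler (fps2_exp Z) = graded_sum (\<lambda>n. euler (scal2 (inverse (fact n)) * Z ^ n))"
    unfolding fps2_exp_def euler_graded_sum ..
  also have "\<dots> = graded_sum (\<lambda>n. euler (scal2 (inverse (fact (Suc n))) * Z ^ Suc n))"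
    by (rule graded_sum_shift) (simp_all add: euler_vanishes_below exp_term_vanishes_below[OF Z])
  also have "\<dots> = sandwich_sum (\<lambda>a b. inverse (fact (a + b + 1))) Z (euler Z)"
    unfolding sandwich_sum_def euler_scal2_mult euler_power
    by (simp add: sum_distrib_left)
  finally show ?thesis .
qed

text \<open>The derivative of the exponential map,
  \<open>E(exp V) = exp V \<cdot> ((1 - exp (- ad V)) / ad V) (E V)\<close>, and conjugation by \<open>exp Y\<close>.\<close>

lemma euler_fps2_exp:
  assumes "vanishes_below 1 V"
  shows "euler (fps2_exp V) = fps2_exp V * ad_series dexp_coeff V (euler V)"
proof -
  have "exp_left_coeff (ad_coeff dexp_coeff) = (\<lambda>a b. inverse (fact (a + b + 1)) :: 'k)"
    by (intro ext) (simp add: exp_left_coeff_ad_dexp)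
  then show ?thesis
    by (simp add: ad_series_eq_sandwich_sum fps2_exp_mult_sandwich_sum[OF assms]
        euler_fps2_exp_eq_sandwich_sum[OF assms])
qed

lemma mult_fps2_exp_eq_conj:
  assumes "vanishes_below 1 Y"
  shows "B * fps2_exp Y = fps2_exp Y * ad_series exp_neg_coeff Y B"
proof -
  have "exp_left_coeff (ad_coeff exp_neg_coeff) = (\<lambda>a b. if a = 0 then inverse (fact b) else 0 :: 'k)"
    by (intro ext) (simp add: exp_left_coeff_ad_exp_neg)
  then show ?thesis
    by (simp add: ad_series_eq_sandwich_sum fps2_exp_mult_sandwich_sum[OF assms]
        mult_fps2_exp_eq_sandwich_sum[OF assms])
qed

end


context k_algebra
begin

lemma subspace_k_zero: "subspace_k sc S \<Longrightarrow> 0 \<in> S"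
  by (simp add: subspace_k_def)

lemma subspace_k_add: "subspace_k sc S \<Longrightarrow> x \<in> S \<Longrightarrow> y \<in> S \<Longrightarrow> x + y \<in> S"
  by (simp add: subspace_k_def)

lemma subspace_k_scal: "subspace_k sc S \<Longrightarrow> x \<in> S \<Longrightarrow> scal c * x \<in> S"
  by (simp add: subspace_k_def flip: sc_eq_scal_mult)

lemma subspace_k_diff: "subspace_k sc S \<Longrightarrow> x \<in> S \<Longrightarrow> y \<in> S \<Longrightarrow> x - y \<in> S"
  using subspace_k_add[of S x "scal (-1) * y"] subspace_k_scal[of S y "-1"] by (simp add: scal_uminus)

lemma subspace_k_of_nat_mult: "subspace_k sc S \<Longrightarrow> x \<in> S \<Longrightarrow> of_nat n * x \<in> S"
  using subspace_k_scal[of S x "of_nat n"] by simp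

lemma subspace_k_sum: "subspace_k sc S \<Longrightarrow> (\<And>x. x \<in> A \<Longrightarrow> f x \<in> S) \<Longrightarrow> sum f A \<in> S"
  by (induct A rule: infinite_finite_induct) (auto intro: subspace_k_zero subspace_k_add)

lemma subspace_k_of_nat_mult_cancel:
  assumes "subspace_k sc S" "of_nat n * x \<in> S" "n > 0"
  shows "x \<in> S"
proof -
  have "scal (inverse (of_nat n)) * (of_nat n * x) = x"
    using scal_inverse_of_nat[OF assms(3)] by (simp add: mult.assoc[symmetric])
  then show ?thesis
    using subspace_k_scal[OF assms(1,2), of "inverse (of_nat n)"] by simp
qed

definition coeffs_in :: "'a set \<Rightarrow> 'a fps fps \<Rightarrow> bool" where
  "coeffs_in S F \<longleftrightarrow> (\<forall>i j. F $ i $ j \<in> S)"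

lemma coeffs_in_add: "subspace_k sc S \<Longrightarrow> coeffs_in S F \<Longrightarrow> coeffs_in S G \<Longrightarrow> coeffs_in S (F + G)"
  by (simp add: coeffs_in_def subspace_k_add)

lemma coeffs_in_diff: "subspace_k sc S \<Longrightarrow> coeffs_in S F \<Longrightarrow> coeffs_in S G \<Longrightarrow> coeffs_in S (F - G)"
  by (simp add: coeffs_in_def subspace_k_diff fps_sub_nth)

lemma coeffs_in_scal2_mult: "subspace_k sc S \<Longrightarrow> coeffs_in S F \<Longrightarrow> coeffs_in S (scal2 c * F)"
  by (simp add: coeffs_in_def subspace_k_scal)

lemma coeffs_in_euler: "subspace_k sc S \<Longrightarrow> coeffs_in S F \<Longrightarrow> coeffs_in S (euler F)"
  by (auto simp only: coeffs_in_def euler_nth intro!: subspace_k_of_nat_mult)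

lemma coeffs_in_graded_sum: "subspace_k sc S \<Longrightarrow> (\<And>n. coeffs_in S (f n)) \<Longrightarrow> coeffs_in S (graded_sum f)"
  by (simp add: coeffs_in_def graded_sum_nth fps_sum_nth subspace_k_sum)

lemma coeffs_in_commutator:
  assumes S: "subspace_k sc S" "\<forall>x\<in>S. \<forall>y\<in>S. x * y - y * x \<in> S"
    and "coeffs_in S Z" "coeffs_in S A"
  shows "coeffs_in S (Z * A - A * Z)"
  unfolding coeffs_in_def
proof (intro allI)
  fix i j
  have "(A * Z) $ i $ j = (\<Sum>p\<le>i. \<Sum>q\<le>j. A $ (i - p) $ (j - q) * Z $ p $ q)"
    unfolding fps2_mult_nth atMost_atLeast0
    by (subst (1 2) sum.atLeastAtMost_rev) (simp add: atLeast0AtMost)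
  then have "(Z * A - A * Z) $ i $ j
      = (\<Sum>p\<le>i. \<Sum>q\<le>j. Z $ p $ q * A $ (i - p) $ (j - q) - A $ (i - p) $ (j - q) * Z $ p $ q)"
    by (simp add: fps_sub_nth fps2_mult_nth sum_subtractf)
  also have "\<dots> \<in> S"
    using assms by (auto simp: coeffs_in_def intro!: subspace_k_sum)
  finally show "(Z * A - A * Z) $ i $ j \<in> S" .
qed

lemma coeffs_in_ad_series:
  assumes "subspace_k sc S" "\<forall>x\<in>S. \<forall>y\<in>S. x * y - y * x \<in> S" "coeffs_in S Z" "coeffs_in S A"
  shows "coeffs_in S (ad_series l Z A)"
proof -
  have "coeffs_in S (ad_power Z n A)" for n
    by (induct n) (simp_all add: assms coeffs_in_commutator)
  then show ?thesis
    unfolding ad_series_def by (intro coeffs_in_graded_sum coeffs_in_scal2_mult assms)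
qed

lemma ad_series_minus_head_eq_below:
  assumes "vanishes_below 1 V" "vanishes_below 1 V'" "vanishes_below 1 A" "vanishes_below 1 A'"
    and "eq_below d V V'" "eq_below d A A'"
  shows "eq_below (Suc d) (ad_series l V A - scal2 (l 0) * A) (ad_series l V' A' - scal2 (l 0) * A')"
proof -
  have head: "ad_series l V A - scal2 (l 0) * A = graded_sum (\<lambda>n. if n = 0 then 0 else scal2 (l n) * ad_power V n A)"
    for V A
    using graded_sum_diff[of "\<lambda>n. scal2 (l n) * ad_power V n A" "\<lambda>n. if n = 0 then scal2 (l 0) * A else 0"]
      graded_sum_single[of 0 "scal2 (l 0) * A"]
    by (simp add: ad_series_def if_distrib[of "\<lambda>x. _ - x"] cong: if_cong)
  show ?thesis
    unfolding head
    by (intro graded_sum_eq_below) (simp add: eq_below_mult eq_below_ad_power[OF assms])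
qed

text \<open>If \<open>exp W = exp X exp Y\<close>, then \<open>dexp\<^sub>W(E W)\<close> is a Lie series in \<open>X, Y\<close>: apply \<open>E\<close>
  to both sides, use the derivative formula and move \<open>exp Y\<close> to the left.\<close>

lemma ad_series_dexp_of_product:
  assumes X: "vanishes_below 1 X" and Y: "vanishes_below 1 Y" and W: "vanishes_below 1 W"
    and exp: "fps2_exp W = fps2_exp X * fps2_exp Y"
  shows "ad_series dexp_coeff W (euler W)
    = ad_series exp_neg_coeff Y (ad_series dexp_coeff X (euler X)) + ad_series dexp_coeff Y (euler Y)"
proof -
  let ?DX = "ad_series dexp_coeff X (euler X)" and ?DY = "ad_series dexp_coeff Y (euler Y)"
  have "fps2_exp W * ad_series dexp_coeff W (euler W) = euler (fps2_exp X * fps2_exp Y)"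
    using euler_fps2_exp[OF W] by (simp add: exp)
  also have "\<dots> = fps2_exp X * ?DX * fps2_exp Y + fps2_exp X * (fps2_exp Y * ?DY)"
    by (simp add: euler_mult euler_fps2_exp[OF X] euler_fps2_exp[OF Y])
  also have "\<dots> = fps2_exp X * (fps2_exp Y * ad_series exp_neg_coeff Y ?DX) + fps2_exp X * (fps2_exp Y * ?DY)"
    by (simp only: mult.assoc mult_fps2_exp_eq_conj[OF Y, of ?DX])
  also have "\<dots> = fps2_exp W * (ad_series exp_neg_coeff Y ?DX + ?DY)"
    by (simp add: exp mult.assoc distrib_left)
  finally show ?thesis
    by (rule fps2_mult_left_cancel[rotated]) simp
qed

text \<open>Conversely \<open>W\<close> is recovered from \<open>dexp\<^sub>W(E W)\<close> degree by degree: its degree \<open>N\<close>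
  part is \<open>N W\<^sub>N\<close> plus terms built from the lower-degree parts of \<open>W\<close>, and \<open>N\<close> is
  invertible in characteristic zero.\<close>

lemma coeffs_in_of_ad_series_dexp:
  assumes S: "subspace_k sc S" "\<forall>x\<in>S. \<forall>y\<in>S. x * y - y * x \<in> S"
    and W: "vanishes_below 1 W" and D: "coeffs_in S (ad_series dexp_coeff W (euler W))"
  shows "coeffs_in S W"
proof -
  have "\<forall>i j. i + j < N \<longrightarrow> W $ i $ j \<in> S" for N
  proof (induct N)
    case (Suc N)
    define W' where "W' = Abs_fps (\<lambda>i. Abs_fps (\<lambda>j. if i + j < N then W $ i $ j else 0))"
    have WW': "eq_below N W W'"
      by (simp add: W'_def eq_below_def vanishes_below_def fps_sub_nth)
    have W': "vanishes_below 1 W'" "coeffs_in S W'"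
      using W Suc subspace_k_zero[OF S(1)] by (simp_all add: W'_def coeffs_in_def)
    have "eq_below (Suc N) (ad_series dexp_coeff W (euler W) - euler W)
        (ad_series dexp_coeff W' (euler W') - euler W')"
      using ad_series_minus_head_eq_below[OF W W'(1) euler_vanishes_below_1 euler_vanishes_below_1
          WW' eq_below_euler[OF WW'], of dexp_coeff]
      by (simp add: dexp_coeff_def)
    from eq_below_diff[OF eq_below_refl[of _ "ad_series dexp_coeff W (euler W)"] this]
    have E: "eq_below (Suc N) (euler W)
        (ad_series dexp_coeff W (euler W) - (ad_series dexp_coeff W' (euler W') - euler W'))"
      by simp
    have "coeffs_in S (ad_series dexp_coeff W (euler W) - (ad_series dexp_coeff W' (euler W') - euler W'))"
      using coeffs_in_euler[OF S(1) W'(2)]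
      by (intro coeffs_in_diff[OF S(1) D] coeffs_in_diff[OF S(1) coeffs_in_ad_series[OF S W'(2)]])
    then have N: "of_nat N * W $ i $ j \<in> S" if "i + j = N" for i j
      using eq_below_nth[OF E, of i j] that unfolding coeffs_in_def by (simp only: euler_nth)
    have "W $ i $ j \<in> S" if "i + j = N" for i j
    proof (cases "N = 0")
      case True
      then show ?thesis
        using W that subspace_k_zero[OF S(1)] by simp
    next
      case False
      then show ?thesis
        using subspace_k_of_nat_mult_cancel[OF S(1) N[OF that]] by simp
    qed
    with Suc show ?case
      by (auto simp: less_Suc_eq)
  qed simp
  then show ?thesis
    unfolding coeffs_in_def by (meson less_add_Suc1)
qed

theorem coeffs_in_fps2_bch:
  assumes S: "subspace_k sc S" "\<forall>x\<in>S. \<forall>y\<in>S. x * y - y * x \<in> S"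
    and X: "vanishes_below 1 X" "coeffs_in S X" and Y: "vanishes_below 1 Y" "coeffs_in S Y"
  shows "coeffs_in S (fps2_bch X Y)"
proof -
  define W where "W = X + Y + fps2_bch X Y"
  have "is_bch X Y (fps2_bch X Y)"
    using is_bch_fps2_bch[OF X(1) Y(1)] .
  then have W: "vanishes_below 1 W" "fps2_exp W = fps2_exp X * fps2_exp Y"
    using X Y by (simp_all add: W_def is_bch_def)
  have "coeffs_in S (ad_series dexp_coeff W (euler W))"
    unfolding ad_series_dexp_of_product[OF X(1) Y(1) W]
    using S X Y by (intro coeffs_in_add coeffs_in_ad_series coeffs_in_euler)
  then have "coeffs_in S (W - X - Y)"
    using S X Y by (intro coeffs_in_diff coeffs_in_of_ad_series_dexp[OF S W(1)])
  then show ?thesis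
    by (simp add: W_def)
qed

end


section \<open>Coefficient functions and restriction to sets of exponents\<close>

definition to_fps :: "'a::ring_1 fps2 \<Rightarrow> 'a fps fps" where
  "to_fps f = Abs_fps (\<lambda>i. Abs_fps (\<lambda>j. f i j))"

lemma to_fps_nth [simp]: "to_fps f $ i $ j = f i j"
  by (simp add: to_fps_def)

lemma to_fps_inject: "to_fps f = to_fps g \<longleftrightarrow> f = g"
  by (metis ext to_fps_nth)

lemma to_fps_coeffs: "to_fps (\<lambda>i j. F $ i $ j) = F"
  by (rule fps_ext, rule fps_ext) simp

lemma to_fps_fadd: "to_fps (fadd f g) = to_fps f + to_fps g"
  by (rule fps_ext, rule fps_ext) (simp add: fadd_def)

lemma to_fps_fmul: "to_fps (fmul f g) = to_fps f * to_fps g"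
  by (rule fps_ext, rule fps_ext) (simp add: fmul_def fps2_mult_nth)

lemma to_fps_fpow: "to_fps (fpow f n) = to_fps f ^ n"
proof (induct n)
  case 0
  show ?case
    by (rule fps_ext, rule fps_ext) (simp add: fone_def)
qed (simp add: to_fps_fmul)

context k_algebra
begin

lemma to_fps_fexp: "to_fps (fexp sc f) = fps2_exp (to_fps f)"
  by (rule fps_ext, rule fps_ext)
    (simp add: fexp_def fps2_exp_def graded_sum_nth fps_sum_nth sc_eq_scal_mult flip: to_fps_fpow)

lemma to_fps_BCH:
  assumes "f 0 0 = 0" "g 0 0 = 0"
  shows "to_fps (BCH sc f g) = fps2_bch (to_fps f) (to_fps g)"
proof -
  have fg: "vanishes_below 1 (to_fps f)" "vanishes_below 1 (to_fps g)"
    using assms by simp_all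
  have char: "z 0 0 = 0 \<and> fmul (fexp sc f) (fexp sc g) = fexp sc (fadd (fadd f g) z)
      \<longleftrightarrow> is_bch (to_fps f) (to_fps g) (to_fps z)" for z
    by (simp add: is_bch_def to_fps_inject[symmetric] to_fps_fmul to_fps_fexp to_fps_fadd)
  have "BCH sc f g = (\<lambda>i j. fps2_bch (to_fps f) (to_fps g) $ i $ j)"
    unfolding BCH_def char
  proof (rule the_equality)
    show "is_bch (to_fps f) (to_fps g) (to_fps (\<lambda>i j. fps2_bch (to_fps f) (to_fps g) $ i $ j))"
      unfolding to_fps_coeffs by (rule is_bch_fps2_bch[OF fg])
  next
    fix z assume "is_bch (to_fps f) (to_fps g) (to_fps z)"
    then show "z = (\<lambda>i j. fps2_bch (to_fps f) (to_fps g) $ i $ j)"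
      using fps2_bch_unique[OF fg] by (metis to_fps_coeffs to_fps_inject)
  qed
  then show ?thesis
    by (simp add: to_fps_coeffs)
qed

lemma BCH_nth_00: "f 0 0 = 0 \<Longrightarrow> g 0 0 = 0 \<Longrightarrow> BCH sc f g 0 0 = 0"
  using fps2_bch_vanishes_below_1[of "to_fps f" "to_fps g"] by (simp flip: to_fps_BCH)

lemma eq_below_BCH:
  assumes "f 0 0 = 0" "g 0 0 = 0" "f' 0 0 = 0" "g' 0 0 = 0"
    and "eq_below d (to_fps f) (to_fps f')" "eq_below d (to_fps g) (to_fps g')"
  shows "eq_below (Suc d) (to_fps (BCH sc f g)) (to_fps (BCH sc f' g'))"
  using assms by (simp add: to_fps_BCH eq_below_fps2_bch)

lemma fexp_Cmap: "x 0 0 = 0 \<Longrightarrow> y 0 0 = 0 \<Longrightarrow> fmul (fexp sc x) (fexp sc y) = fexp sc (Cmap sc x y)"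
  using is_bch_fps2_bch[of "to_fps x" "to_fps y"]
  by (simp add: to_fps_inject[symmetric] to_fps_fmul to_fps_fexp Cmap_def to_fps_fadd to_fps_BCH is_bch_def)

lemma fexp_inj: "a 0 0 = 0 \<Longrightarrow> b 0 0 = 0 \<Longrightarrow> fexp sc a = fexp sc b \<Longrightarrow> a = b"
  using fps2_exp_inj[of "to_fps a" "to_fps b"] by (simp add: to_fps_fexp[symmetric] to_fps_inject)

lemma Cmap_nth_00: "x 0 0 = 0 \<Longrightarrow> y 0 0 = 0 \<Longrightarrow> Cmap sc x y 0 0 = 0"
  by (simp add: Cmap_def fadd_def BCH_nth_00)

lemma coeffs_in_to_fps: "coeffs_in S (to_fps f) \<longleftrightarrow> f \<in> gbar S"
  by (simp add: coeffs_in_def gbar_def)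

lemma BCH_gbar1:
  assumes "subspace_k sc G" "\<forall>x\<in>G. \<forall>y\<in>G. x * y - y * x \<in> G" "x \<in> gbar1 G" "y \<in> gbar1 G"
  shows "BCH sc x y \<in> gbar1 G"
proof -
  have "x 0 0 = 0" "y 0 0 = 0"
    using assms(3,4) by (simp_all add: gbar1_def)
  moreover from this have "coeffs_in G (fps2_bch (to_fps x) (to_fps y))"
    using assms by (intro coeffs_in_fps2_bch) (simp_all add: coeffs_in_to_fps gbar1_def)
  ultimately show ?thesis
    by (simp add: gbar1_def BCH_nth_00 flip: coeffs_in_to_fps to_fps_BCH)
qed

end

text \<open>If a sum of exponents lies in \<open>P\<close> exactly when both summands do, restricting the
  coefficients to \<open>P\<close> is a ring endomorphism.\<close>

definition factor_closed :: "(nat \<Rightarrow> nat \<Rightarrow> bool) \<Rightarrow> bool" where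
  "factor_closed P \<longleftrightarrow> P 0 0 \<and> (\<forall>i j p q. p \<le> i \<longrightarrow> q \<le> j \<longrightarrow> (P i j \<longleftrightarrow> P p q \<and> P (i - p) (j - q)))"

definition restrict_coeffs :: "(nat \<Rightarrow> nat \<Rightarrow> bool) \<Rightarrow> 'a::ring_1 fps fps \<Rightarrow> 'a fps fps" where
  "restrict_coeffs P F = Abs_fps (\<lambda>i. Abs_fps (\<lambda>j. if P i j then F $ i $ j else 0))"

lemma factor_closed_axis: "factor_closed (\<lambda>i j. i = 0)" "factor_closed (\<lambda>i j. j = 0)"
  by (auto simp: factor_closed_def)

lemma restrict_coeffs_nth [simp]: "restrict_coeffs P F $ i $ j = (if P i j then F $ i $ j else 0)"
  by (simp add: restrict_coeffs_def)

lemma restrict_coeffs_add: "restrict_coeffs P (F + G) = restrict_coeffs P F + restrict_coeffs P G"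
  by (rule fps_ext, rule fps_ext) simp

lemma restrict_coeffs_one: "factor_closed P \<Longrightarrow> restrict_coeffs P 1 = 1"
  by (rule fps_ext, rule fps_ext) (auto simp: factor_closed_def)

lemma restrict_coeffs_mult:
  assumes "factor_closed P"
  shows "restrict_coeffs P (F * G) = restrict_coeffs P F * restrict_coeffs P G"
proof (rule fps_ext, rule fps_ext)
  fix i j
  have "(if P i j then F $ p $ q * G $ (i - p) $ (j - q) else 0) =
      (if P p q then F $ p $ q else 0) * (if P (i - p) (j - q) then G $ (i - p) $ (j - q) else 0)"
    if "p \<le> i" "q \<le> j" for p q
    using assms that unfolding factor_closed_def by auto
  then show "restrict_coeffs P (F * G) $ i $ j = (restrict_coeffs P F * restrict_coeffs P G) $ i $ j"
    unfolding restrict_coeffs_nth fps2_mult_nth if_distrib[of "\<lambda>x. x $ i $ j"]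
    by (auto intro!: sum.cong)
qed

lemma restrict_coeffs_power: "factor_closed P \<Longrightarrow> restrict_coeffs P (F ^ n) = restrict_coeffs P F ^ n"
  by (induct n) (simp_all add: restrict_coeffs_mult restrict_coeffs_one)

lemma restrict_coeffs_graded_sum: "restrict_coeffs P (graded_sum f) = graded_sum (\<lambda>n. restrict_coeffs P (f n))"
  by (rule fps_ext, rule fps_ext) (simp add: graded_sum_nth fps_sum_nth)

context k_algebra
begin

lemma restrict_coeffs_fps2_exp:
  assumes "factor_closed P"
  shows "restrict_coeffs P (fps2_exp W) = fps2_exp (restrict_coeffs P W)"
proof -
  have "restrict_coeffs P (scal2 c * F) = scal2 c * restrict_coeffs P F" for c F
    by (rule fps_ext, rule fps_ext) simp
  then show ?thesis
    by (simp add: fps2_exp_def restrict_coeffs_graded_sum restrict_coeffs_power[OF assms])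
qed

lemma restrict_coeffs_fps2_bch:
  assumes P: "factor_closed P" and "vanishes_below 1 X" "vanishes_below 1 Y"
  shows "restrict_coeffs P (fps2_bch X Y) = fps2_bch (restrict_coeffs P X) (restrict_coeffs P Y)"
proof -
  have "P 0 0"
    using P by (simp add: factor_closed_def)
  from is_bch_fps2_bch[OF assms(2,3)] this
  have "is_bch (restrict_coeffs P X) (restrict_coeffs P Y) (restrict_coeffs P (fps2_bch X Y))"
    unfolding is_bch_def
    by (simp add: restrict_coeffs_fps2_exp[OF P, symmetric] restrict_coeffs_mult[OF P, symmetric]
        restrict_coeffs_add[symmetric])
  then show ?thesis
    using assms \<open>P 0 0\<close> by (intro fps2_bch_unique[symmetric]) simp_all
qed

lemma fps2_bch_restrict_vanishes_below:
  assumes P: "factor_closed P" and X: "vanishes_below 1 X" and Y: "vanishes_below 1 Y"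
    and "vanishes_below d (restrict_coeffs P X) \<or> vanishes_below d (restrict_coeffs P Y)"
  shows "vanishes_below (Suc d) (restrict_coeffs P (fps2_bch X Y))"
proof -
  let ?X = "restrict_coeffs P X" and ?Y = "restrict_coeffs P Y"
  have "P 0 0"
    using P by (simp add: factor_closed_def)
  then have X': "vanishes_below 1 ?X" and Y': "vanishes_below 1 ?Y"
    using X Y by simp_all
  from assms(4) have "eq_below (Suc d) (fps2_bch ?X ?Y) 0"
  proof
    assume "vanishes_below d ?X"
    then have "eq_below (Suc d) (fps2_bch ?X ?Y) (fps2_bch 0 ?Y)"
      using X' Y' by (intro eq_below_fps2_bch) (simp_all add: vanishes_below_iff_eq_below_zero)
    moreover have "fps2_bch 0 ?Y = 0"
      using Y' by (simp add: fps2_bch_unique is_bch_def)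
    ultimately show ?thesis
      by simp
  next
    assume "vanishes_below d ?Y"
    then have "eq_below (Suc d) (fps2_bch ?X ?Y) (fps2_bch ?X 0)"
      using X' Y' by (intro eq_below_fps2_bch) (simp_all add: vanishes_below_iff_eq_below_zero)
    moreover have "fps2_bch ?X 0 = 0"
      using X' by (simp add: fps2_bch_unique is_bch_def)
    ultimately show ?thesis
      by simp
  qed
  then show ?thesis
    by (simp add: restrict_coeffs_fps2_bch[OF P X Y] vanishes_below_iff_eq_below_zero)
qed

end


context k_algebra
begin

lemma BCH_vanishes_on:
  assumes P: "factor_closed P" and "x 0 0 = 0" "y 0 0 = 0"
    and "(\<forall>i j. P i j \<longrightarrow> x i j = 0) \<or> (\<forall>i j. P i j \<longrightarrow> y i j = 0)" and "P i j"
  shows "BCH sc x y i j = 0"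
proof -
  have "vanishes_below (i + j) (restrict_coeffs P (to_fps x)) \<or> vanishes_below (i + j) (restrict_coeffs P (to_fps y))"
    using assms(4) by (auto simp: vanishes_below_def)
  from fps2_bch_restrict_vanishes_below[OF P _ _ this]
  have "vanishes_below (Suc (i + j)) (restrict_coeffs P (to_fps (BCH sc x y)))"
    using assms(2,3) by (simp add: to_fps_BCH)
  from vanishes_below_nth[OF this, of i j] show ?thesis
    using assms(5) by simp
qed

end


section \<open>The BCH recursion for a splitting of a Lie algebra\<close>

definition vanishing_on :: "(nat \<Rightarrow> nat \<Rightarrow> bool) \<Rightarrow> 'a::zero set \<Rightarrow> 'a fps2 set" where
  "vanishing_on P S = {f. \<forall>i j. f i j \<in> S \<and> (P i j \<longrightarrow> f i j = 0)}"

lemma sG_eq_vanishing_on: "sG S = vanishing_on (\<lambda>i j. i = 0) S"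
  by (simp add: sG_def vanishing_on_def)

lemma tG_eq_vanishing_on: "tG S = vanishing_on (\<lambda>i j. j = 0) S"
  by (simp add: tG_def vanishing_on_def)

locale lie_splitting = k_algebra sc for sc :: "'k::field_char_0 \<Rightarrow> 'a::ring_1 \<Rightarrow> 'a" +
  fixes G A B :: "'a set"
  assumes G_subspace: "subspace_k sc G" and G_lie: "\<forall>x\<in>G. \<forall>y\<in>G. x * y - y * x \<in> G"
    and A_subspace: "subspace_k sc A" and B_subspace: "subspace_k sc B"
    and direct: "A \<inter> B = {0}" and decomp: "G = {a + b | a b. a \<in> A \<and> b \<in> B}"
begin

lemma swap: "lie_splitting sc G B A"
proof unfold_locales
  show "G = {a + b | a b. a \<in> B \<and> b \<in> A}"
    unfolding decomp by (auto, (metis add.commute)+)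
qed (use G_subspace G_lie A_subspace B_subspace direct in auto)

lemma A_subset: "A \<subseteq> G"
  using decomp subspace_k_zero[OF B_subspace] by force

lemma B_subset: "B \<subseteq> G"
  using decomp subspace_k_zero[OF A_subspace] by force

lemma proj_eqI: "m \<in> A \<Longrightarrow> x - m \<in> B \<Longrightarrow> proj A B x = m"
  unfolding proj_def
proof (rule the_equality)
  fix m' assume "m \<in> A" "x - m \<in> B" "m' \<in> A \<and> x - m' \<in> B"
  then have "m' - m \<in> A \<inter> B"
    using subspace_k_diff[OF A_subspace] subspace_k_diff[OF B_subspace, of "x - m" "x - m'"] by simp
  then show "m' = m"
    using direct by simp
qed simp

lemma proj_mem: "x \<in> G \<Longrightarrow> proj A B x \<in> A \<and> x - proj A B x \<in> B"
  using decomp proj_eqI by fastforce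

lemma proj_of_A: "x \<in> A \<Longrightarrow> proj A B x = x"
  by (simp add: proj_eqI subspace_k_zero[OF B_subspace])

lemma proj_of_B: "x \<in> B \<Longrightarrow> proj A B x = 0"
  by (simp add: proj_eqI subspace_k_zero[OF A_subspace])

lemma Pbar_gbar: "f \<in> gbar G \<Longrightarrow> Pbar A B f \<in> gbar A"
  using proj_mem by (simp add: Pbar_def gbar_def)

lemma Ptbar_gbar: "f \<in> gbar G \<Longrightarrow> Ptbar A B f \<in> gbar B"
  using proj_mem by (simp add: Ptbar_def gbar_def)

lemma Pbar_nth_00: "f 0 0 = 0 \<Longrightarrow> Pbar A B f 0 0 = 0"
  using proj_of_B subspace_k_zero[OF B_subspace] by (simp add: Pbar_def)

lemma Ptbar_nth_00: "f 0 0 = 0 \<Longrightarrow> Ptbar A B f 0 0 = 0"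
  using proj_of_B subspace_k_zero[OF B_subspace] by (simp add: Ptbar_def)

lemma Pbar_gbar1: "f \<in> gbar1 G \<Longrightarrow> Pbar A B f \<in> gbar1 G"
  using Pbar_gbar A_subset Pbar_nth_00 by (fastforce simp: gbar1_def gbar_def)

lemma Ptbar_gbar1: "f \<in> gbar1 G \<Longrightarrow> Ptbar A B f \<in> gbar1 G"
  using Ptbar_gbar B_subset Ptbar_nth_00 by (fastforce simp: gbar1_def gbar_def)

lemma eq_below_Pbar: "eq_below d (to_fps f) (to_fps g) \<Longrightarrow> eq_below d (to_fps (Pbar A B f)) (to_fps (Pbar A B g))"
  by (simp add: eq_below_def vanishes_below_def fps_sub_nth Pbar_def)

lemma eq_below_Ptbar: "eq_below d (to_fps f) (to_fps g) \<Longrightarrow> eq_below d (to_fps (Ptbar A B f)) (to_fps (Ptbar A B g))"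
  by (simp add: eq_below_def vanishes_below_def fps_sub_nth Ptbar_def)

lemma BCH_projections_nth_00: "f 0 0 = 0 \<Longrightarrow> BCH sc (Pbar A B f) (Ptbar A B f) 0 0 = 0"
  by (simp add: BCH_nth_00 Pbar_nth_00 Ptbar_nth_00)

lemma eq_below_BCH_projections:
  "f 0 0 = 0 \<Longrightarrow> g 0 0 = 0 \<Longrightarrow> eq_below d (to_fps f) (to_fps g) \<Longrightarrow>
    eq_below (Suc d) (to_fps (BCH sc (Pbar A B f) (Ptbar A B f))) (to_fps (BCH sc (Pbar A B g) (Ptbar A B g)))"
  by (intro eq_below_BCH eq_below_Pbar eq_below_Ptbar Pbar_nth_00 Ptbar_nth_00)

context
  fixes v assumes v: "v \<in> gbar1 G"
begin

lemma chi_iter_gbar1: "chi_iter sc A B v n \<in> gbar1 G"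
proof (induct n)
  case (Suc n)
  have "BCH sc (Pbar A B (chi_iter sc A B v n)) (Ptbar A B (chi_iter sc A B v n)) \<in> gbar1 G"
    using Suc by (intro BCH_gbar1 G_subspace G_lie Pbar_gbar1 Ptbar_gbar1)
  then show ?case
    using v subspace_k_diff[OF G_subspace] by (simp add: gbar1_def gbar_def fsub_def)
qed (use v in simp)

lemma chi_iter_nth_00: "chi_iter sc A B v n 0 0 = 0"
  using chi_iter_gbar1 by (simp add: gbar1_def)

lemma eq_below_chi_iter_Suc:
  "eq_below (Suc n) (to_fps (chi_iter sc A B v (Suc n))) (to_fps (chi_iter sc A B v n))"
proof (induct n)
  case 0
  show ?case
    using v BCH_projections_nth_00[of v] by (simp add: eq_below_def fsub_def fps_sub_nth gbar1_def)
next
  case (Suc n)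
  then show ?case
    using eq_below_BCH_projections[OF chi_iter_nth_00 chi_iter_nth_00 Suc]
    by (simp add: eq_below_def vanishes_below_def fsub_def fps_sub_nth)
qed

lemma chi_nth: "chi sc A B v i j = chi_iter sc A B v (i + j) i j"
proof -
  have stable: "chi_iter sc A B v n i j = chi_iter sc A B v (i + j) i j" if "i + j \<le> n" for n
    using eq_below_nth[OF eq_below_stable_seq[OF eq_below_chi_iter_Suc that]] by simp
  show ?thesis
    unfolding chi_def
  proof (rule the_equality)
    fix w assume "\<exists>N. \<forall>n\<ge>N. chi_iter sc A B v n i j = w"
    then obtain N where "\<forall>n\<ge>N. chi_iter sc A B v n i j = w"
      by blast
    then show "w = chi_iter sc A B v (i + j) i j"
      using stable[of "max N (i + j)"] by simp
  qed (use stable in blast)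
qed

lemma eq_below_chi: "eq_below (Suc n) (to_fps (chi sc A B v)) (to_fps (chi_iter sc A B v n))"
proof -
  have "to_fps (chi sc A B v) = stable_limit (\<lambda>n. to_fps (chi_iter sc A B v n))"
    by (rule fps_ext, rule fps_ext) (simp add: stable_limit_def chi_nth)
  then show ?thesis
    using eq_below_stable_limit[OF eq_below_chi_iter_Suc] by simp
qed

lemma chi_gbar1: "chi sc A B v \<in> gbar1 G"
  using v chi_iter_gbar1 by (simp add: gbar1_def gbar_def chi_nth)

lemma chi_fixpoint: "chi sc A B v = fsub v (BCH sc (Pbar A B (chi sc A B v)) (Ptbar A B (chi sc A B v)))"
proof (rule iffD1[OF to_fps_inject], rule eq_below_eqI)
  fix n
  let ?c = "chi sc A B v" and ?i = "chi_iter sc A B v n"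
  have "eq_below n (to_fps ?c) (to_fps ?i)"
    using eq_below_chi[of n] by (rule eq_below_Suc_mono)
  then have "eq_below (Suc n) (to_fps (BCH sc (Pbar A B ?c) (Ptbar A B ?c)))
      (to_fps (BCH sc (Pbar A B ?i) (Ptbar A B ?i)))"
    using chi_gbar1 by (intro eq_below_BCH_projections chi_iter_nth_00) (simp_all add: gbar1_def)
  moreover have "eq_below (Suc n) (to_fps ?c) (to_fps (chi_iter sc A B v (Suc n)))"
    using eq_below_chi[of "Suc n"] eq_below_Suc_mono by blast
  ultimately show "eq_below n (to_fps ?c) (to_fps (fsub v (BCH sc (Pbar A B ?c) (Ptbar A B ?c))))"
    by (simp add: eq_below_def vanishes_below_def fsub_def fps_sub_nth)
qed

lemma Cmap_chi: "Cmap sc (Pbar A B (chi sc A B v)) (Ptbar A B (chi sc A B v)) = v"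
proof (intro ext)
  fix i j
  have "chi sc A B v i j = v i j - BCH sc (Pbar A B (chi sc A B v)) (Ptbar A B (chi sc A B v)) i j"
    by (subst chi_fixpoint) (simp add: fsub_def)
  then show "Cmap sc (Pbar A B (chi sc A B v)) (Ptbar A B (chi sc A B v)) i j = v i j"
    by (simp add: Cmap_def fadd_def Pbar_def Ptbar_def)
qed

text \<open>Induction on the degree: once \<open>Z\<close> vanishes on \<open>P\<close> below \<open>d\<close>, so does the BCH term
  below \<open>d + 1\<close>, and there \<open>\<chi>(v) = v\<close>.\<close>

lemma chi_component_vanishes:
  assumes P: "factor_closed P"
    and Z: "Z = Pbar A B (chi sc A B v) \<or> Z = Ptbar A B (chi sc A B v)"
    and step: "\<And>i j. P i j \<Longrightarrow> chi sc A B v i j = v i j \<Longrightarrow> Z i j = 0"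
    and "P i j"
  shows "Z i j = 0"
proof -
  let ?c = "chi sc A B v"
  have c00: "Pbar A B ?c 0 0 = 0" "Ptbar A B ?c 0 0 = 0"
    using chi_gbar1 by (simp_all add: gbar1_def Pbar_nth_00 Ptbar_nth_00)
  have "vanishes_below d (restrict_coeffs P (to_fps Z))" for d
  proof (induct d)
    case (Suc d)
    with Z have "vanishes_below (Suc d) (restrict_coeffs P (fps2_bch (to_fps (Pbar A B ?c)) (to_fps (Ptbar A B ?c))))"
      using c00 by (intro fps2_bch_restrict_vanishes_below P) auto
    then have R: "vanishes_below (Suc d) (restrict_coeffs P (to_fps (BCH sc (Pbar A B ?c) (Ptbar A B ?c))))"
      using c00 by (simp add: to_fps_BCH)
    have "BCH sc (Pbar A B ?c) (Ptbar A B ?c) i j = 0" if "P i j" "i + j < Suc d" for i j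
      using vanishes_below_nth[OF R that(2)] that(1) by simp
    then have "Z i j = 0" if "P i j" "i + j < Suc d" for i j
      using that step fun_cong[OF fun_cong[OF chi_fixpoint, of i], of j] by (simp add: fsub_def)
    then show ?case
      by (simp add: vanishes_below_def)
  qed simp
  from vanishes_below_nth[OF this, of i j "Suc (i + j)"] show ?thesis
    using \<open>P i j\<close> by simp
qed

lemma Pbar_chi_vanishes: "factor_closed P \<Longrightarrow> \<forall>i j. P i j \<longrightarrow> v i j \<in> B \<Longrightarrow> P i j \<Longrightarrow> Pbar A B (chi sc A B v) i j = 0"
  by (rule chi_component_vanishes[of P]) (simp_all add: Pbar_def proj_of_B)

lemma Ptbar_chi_vanishes: "factor_closed P \<Longrightarrow> \<forall>i j. P i j \<longrightarrow> v i j \<in> A \<Longrightarrow> P i j \<Longrightarrow> Ptbar A B (chi sc A B v) i j = 0"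
  by (rule chi_component_vanishes[of P]) (simp_all add: Ptbar_def proj_of_A)

end

end


context lie_splitting
begin

lemma Cmap_inj:
  assumes x: "x \<in> gbar A" "x 0 0 = 0" "x' \<in> gbar A" "x' 0 0 = 0"
    and y: "y \<in> gbar B" "y 0 0 = 0" "y' \<in> gbar B" "y' 0 0 = 0"
    and eq: "Cmap sc x y = Cmap sc x' y'"
  shows "x = x' \<and> y = y'"
proof -
  have "eq_below d (to_fps x) (to_fps x') \<and> eq_below d (to_fps y) (to_fps y')" for d
  proof (induct d)
    case (Suc d)
    then have BCH: "eq_below (Suc d) (to_fps (BCH sc x y)) (to_fps (BCH sc x' y'))"
      using x y by (intro eq_below_BCH) auto
    have "x i j = x' i j \<and> y i j = y' i j" if "i + j < Suc d" for i j
    proof -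
      have e: "x i j - x' i j = y' i j - y i j"
        using eq_below_nth[OF BCH that] fun_cong[OF fun_cong[OF eq, of i], of j]
        by (simp add: Cmap_def fadd_def algebra_simps)
      have "x i j - x' i j \<in> A" "y' i j - y i j \<in> B"
        using x y subspace_k_diff[OF A_subspace] subspace_k_diff[OF B_subspace] by (simp_all add: gbar_def)
      then have "x i j - x' i j \<in> A \<inter> B"
        using e by simp
      then have "x i j - x' i j = 0"
        using direct by blast
      then show ?thesis
        using e by simp
    qed
    then show ?case
      by (simp add: eq_below_def vanishes_below_def fps_sub_nth)
  qed (simp add: eq_below_def)
  then show ?thesis
    by (simp add: eq_below_eqI flip: to_fps_inject)
qed

text \<open>For the axes \<open>P = {i = 0}\<close> and \<open>Q = {j = 0}\<close> this is the set \<open>V\<close> of the theorem: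
  the image of \<open>C\<close> is described by its restrictions to \<open>P\<close> and \<open>Q\<close>.\<close>

definition cmap_target :: "(nat \<Rightarrow> nat \<Rightarrow> bool) \<Rightarrow> (nat \<Rightarrow> nat \<Rightarrow> bool) \<Rightarrow> 'a fps2 set" where
  "cmap_target P Q = {v \<in> gbar1 G. \<forall>i j. (P i j \<longrightarrow> v i j \<in> B) \<and> (Q i j \<longrightarrow> v i j \<in> A)}"

lemma vanishing_on_nth_00: "factor_closed P \<Longrightarrow> f \<in> vanishing_on P S \<Longrightarrow> f 0 0 = 0"
  by (simp add: factor_closed_def vanishing_on_def)

lemma vanishing_on_gbar: "f \<in> vanishing_on P S \<Longrightarrow> f \<in> gbar S"
  by (simp add: vanishing_on_def gbar_def)

lemma vanishing_on_gbar1: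
  assumes "factor_closed P" "S \<subseteq> G" "f \<in> vanishing_on P S"
  shows "f \<in> gbar1 G"
  using assms vanishing_on_nth_00[OF assms(1,3)] by (auto simp: gbar1_def gbar_def vanishing_on_def)

lemma Cmap_mem_cmap_target:
  assumes P: "factor_closed P" and Q: "factor_closed Q"
    and a: "a \<in> vanishing_on P A" and b: "b \<in> vanishing_on Q B"
  shows "Cmap sc a b \<in> cmap_target P Q"
proof -
  have a1: "a \<in> gbar1 G" and b1: "b \<in> gbar1 G"
    using vanishing_on_gbar1 P Q a b A_subset B_subset by blast+
  then have "BCH sc a b \<in> gbar1 G"
    by (intro BCH_gbar1 G_subspace G_lie)
  then have "Cmap sc a b \<in> gbar1 G"
    using a1 b1 subspace_k_add[OF G_subspace] by (simp add: Cmap_def fadd_def gbar1_def gbar_def)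
  moreover have "BCH sc a b i j = 0" if "P i j \<or> Q i j" for i j
    using that a1 b1 a b by (auto simp: gbar1_def vanishing_on_def intro: BCH_vanishes_on[OF P] BCH_vanishes_on[OF Q])
  ultimately show ?thesis
    using a b by (simp add: cmap_target_def Cmap_def fadd_def vanishing_on_def)
qed

lemma DP_cmap_target:
  assumes P: "factor_closed P" and Q: "factor_closed Q" and v: "v \<in> cmap_target P Q"
  shows "DP sc A B v \<in> vanishing_on P A \<times> vanishing_on Q B \<and> Cmap sc (fst (DP sc A B v)) (snd (DP sc A B v)) = v"
proof -
  let ?c = "chi sc A B v"
  have v1: "v \<in> gbar1 G" and vB: "\<forall>i j. P i j \<longrightarrow> v i j \<in> B" and vA: "\<forall>i j. Q i j \<longrightarrow> v i j \<in> A"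
    using v by (simp_all add: cmap_target_def)
  have c: "?c \<in> gbar G"
    using chi_gbar1[OF v1] by (simp add: gbar1_def)
  have "Pbar A B ?c \<in> vanishing_on P A"
    using Pbar_gbar[OF c] Pbar_chi_vanishes[OF v1 P vB] by (simp add: vanishing_on_def gbar_def)
  moreover have "Ptbar A B ?c \<in> vanishing_on Q B"
    using Ptbar_gbar[OF c] Ptbar_chi_vanishes[OF v1 Q vA] by (simp add: vanishing_on_def gbar_def)
  ultimately show ?thesis
    using Cmap_chi[OF v1] by (simp add: DP_def)
qed

lemma Cmap_inj_on:
  assumes "factor_closed P" "factor_closed Q"
  shows "inj_on (\<lambda>(a, b). Cmap sc a b) (vanishing_on P A \<times> vanishing_on Q B)"
proof (rule inj_onI)
  fix u u' assume "u \<in> vanishing_on P A \<times> vanishing_on Q B" "u' \<in> vanishing_on P A \<times> vanishing_on Q B"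
    and "(\<lambda>(a, b). Cmap sc a b) u = (\<lambda>(a, b). Cmap sc a b) u'"
  then have "fst u = fst u' \<and> snd u = snd u'"
    using vanishing_on_nth_00[OF assms(1)] vanishing_on_nth_00[OF assms(2)]
    by (intro Cmap_inj) (auto simp: case_prod_beta mem_Times_iff intro: vanishing_on_gbar)
  then show "u = u'"
    by (simp add: prod_eq_iff)
qed

theorem Cmap_DP_bij_betw:
  assumes "factor_closed P" "factor_closed Q"
  shows "bij_betw (\<lambda>(a, b). Cmap sc a b) (vanishing_on P A \<times> vanishing_on Q B) (cmap_target P Q)"
    and "bij_betw (DP sc A B) (cmap_target P Q) (vanishing_on P A \<times> vanishing_on Q B)"
proof -
  let ?C = "\<lambda>(a, b). Cmap sc a b" and ?U = "vanishing_on P A \<times> vanishing_on Q B"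
  have C: "?C ` ?U \<subseteq> cmap_target P Q"
  proof (rule image_subsetI)
    fix u assume "u \<in> ?U"
    then show "?C u \<in> cmap_target P Q"
      by (cases u) (simp add: Cmap_mem_cmap_target[OF assms])
  qed
  have D: "DP sc A B ` cmap_target P Q \<subseteq> ?U"
  proof (rule image_subsetI)
    fix v assume "v \<in> cmap_target P Q"
    from DP_cmap_target[OF assms this] show "DP sc A B v \<in> ?U"
      by (rule conjunct1)
  qed
  have CD: "\<forall>v\<in>cmap_target P Q. ?C (DP sc A B v) = v"
  proof
    fix v assume "v \<in> cmap_target P Q"
    from DP_cmap_target[OF assms this] show "?C (DP sc A B v) = v"
      by (simp add: case_prod_beta)
  qed
  have DC: "\<forall>u\<in>?U. DP sc A B (?C u) = u"
  proof
    fix u assume u: "u \<in> ?U"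
    then have Cu: "?C u \<in> cmap_target P Q"
      using C by blast
    have "DP sc A B (?C u) \<in> ?U"
      using D Cu by blast
    from inj_onD[OF Cmap_inj_on[OF assms] CD[rule_format, OF Cu] this u]
    show "DP sc A B (?C u) = u" .
  qed
  show "bij_betw ?C ?U (cmap_target P Q)"
    by (rule bij_betw_byWitness[OF DC CD C D])
  show "bij_betw (DP sc A B) (cmap_target P Q) ?U"
    by (rule bij_betw_byWitness[OF CD DC D C])
qed

lemma fexp_product_inj_on:
  assumes "factor_closed P" "factor_closed Q"
  shows "inj_on (\<lambda>(a, b). fmul (fexp sc a) (fexp sc b)) (vanishing_on P A \<times> vanishing_on Q B)"
proof (rule inj_onI)
  fix u u' assume u: "u \<in> vanishing_on P A \<times> vanishing_on Q B" "u' \<in> vanishing_on P A \<times> vanishing_on Q B"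
    and eq: "(\<lambda>(a, b). fmul (fexp sc a) (fexp sc b)) u = (\<lambda>(a, b). fmul (fexp sc a) (fexp sc b)) u'"
  have z: "fst u 0 0 = 0" "snd u 0 0 = 0" "fst u' 0 0 = 0" "snd u' 0 0 = 0"
    using u by (auto simp: mem_Times_iff intro: vanishing_on_nth_00[OF assms(1)] vanishing_on_nth_00[OF assms(2)])
  with eq have "fexp sc (Cmap sc (fst u) (snd u)) = fexp sc (Cmap sc (fst u') (snd u'))"
    by (simp add: case_prod_beta fexp_Cmap)
  from fexp_inj[OF Cmap_nth_00[of "fst u" "snd u", OF z(1,2)] Cmap_nth_00[of "fst u'" "snd u'", OF z(3,4)] this]
  have "Cmap sc (fst u) (snd u) = Cmap sc (fst u') (snd u')" .
  with inj_onD[OF Cmap_inj_on[OF assms] _ u] show "u = u'"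
    by (simp add: case_prod_beta)
qed

lemma Vset_eq_cmap_target: "Vset A B = cmap_target (\<lambda>i j. i = 0) (\<lambda>i j. j = 0)"
proof (intro equalityI subsetI)
  fix v assume "v \<in> Vset A B"
  then obtain a b where v: "v = fadd a b" and a: "a \<in> sG A" and b: "b \<in> tG B"
    by (auto simp: Vset_def)
  have "a i j + b i j \<in> G" for i j
    using a b unfolding decomp sG_def tG_def by blast
  with a b show "v \<in> cmap_target (\<lambda>i j. i = 0) (\<lambda>i j. j = 0)"
    by (auto simp: v cmap_target_def gbar1_def gbar_def fadd_def sG_def tG_def)
next
  fix v assume "v \<in> cmap_target (\<lambda>i j. i = 0) (\<lambda>i j. j = 0)"
  then have vG: "\<And>i j. v i j \<in> G" and "v 0 0 = 0" and vA: "\<And>i. v i 0 \<in> A" and vB: "\<And>j. v 0 j \<in> B"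
    by (simp_all add: cmap_target_def gbar1_def gbar_def)
  define a where "a i j = (if i = 0 then 0 else if j = 0 then v i 0 else proj A B (v i j))" for i j
  have "a \<in> sG A"
    using vA proj_mem[OF vG] subspace_k_zero[OF A_subspace] by (simp add: sG_def a_def)
  moreover have "fsub v a \<in> tG B"
    using vB proj_mem[OF vG] subspace_k_zero[OF B_subspace] \<open>v 0 0 = 0\<close> by (simp add: tG_def fsub_def a_def)
  moreover have "v = fadd a (fsub v a)"
    by (simp add: fadd_def fsub_def)
  ultimately show "v \<in> Vset A B"
    unfolding Vset_def by blast
qed


lemma Cmap_bij_betw_swapped:
  assumes "factor_closed P" "factor_closed Q"
  shows "bij_betw (\<lambda>(b, a). Cmap sc b a) (vanishing_on Q B \<times> vanishing_on P A) (cmap_target P Q)"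
proof -
  interpret swapped: lie_splitting sc G B A
    by (rule swap)
  have "swapped.cmap_target Q P = cmap_target P Q"
    by (auto simp: cmap_target_def swapped.cmap_target_def)
  with swapped.Cmap_DP_bij_betw(1)[OF assms(2,1)] show ?thesis
    by simp
qed

text \<open>\<open>\<Psi> = D\<^sub>P \<circ> C\<close> passes from the factorization order \<open>exp b exp a\<close> with
  \<open>(b, a) \<in> B \<times> A\<close> to the order \<open>A \<times> B\<close>, through the common image of both versions of \<open>C\<close>.\<close>

theorem Psi_bij_betw:
  assumes "factor_closed P" "factor_closed Q"
  shows "bij_betw (Psi sc A B) (vanishing_on Q B \<times> vanishing_on P A) (vanishing_on P A \<times> vanishing_on Q B)"
proof -
  have "Psi sc A B = DP sc A B \<circ> (\<lambda>(b, a). Cmap sc b a)"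
    by (auto simp: Psi_def)
  with bij_betw_trans[OF Cmap_bij_betw_swapped[OF assms] Cmap_DP_bij_betw(2)[OF assms]]
  show ?thesis
    by simp
qed

theorem fexp_Psi:
  assumes P: "factor_closed P" and Q: "factor_closed Q" and "b \<in> vanishing_on Q B" "a \<in> vanishing_on P A"
  shows "fmul (fexp sc b) (fexp sc a) = fmul (fexp sc (fst (Psi sc A B (b, a)))) (fexp sc (snd (Psi sc A B (b, a))))"
proof -
  have "Cmap sc b a \<in> cmap_target P Q"
    using bij_betwE[OF Cmap_bij_betw_swapped[OF P Q]] assms(3,4) by simp
  from DP_cmap_target[OF P Q this]
  have D: "fst (DP sc A B (Cmap sc b a)) \<in> vanishing_on P A" "snd (DP sc A B (Cmap sc b a)) \<in> vanishing_on Q B"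
    and C: "Cmap sc (fst (DP sc A B (Cmap sc b a))) (snd (DP sc A B (Cmap sc b a))) = Cmap sc b a"
    by (simp_all add: mem_Times_iff)
  have "fst (DP sc A B (Cmap sc b a)) 0 0 = 0" "snd (DP sc A B (Cmap sc b a)) 0 0 = 0"
    using vanishing_on_nth_00[OF P D(1)] vanishing_on_nth_00[OF Q D(2)] .
  moreover have "b 0 0 = 0" "a 0 0 = 0"
    using vanishing_on_nth_00[OF Q assms(3)] vanishing_on_nth_00[OF P assms(4)] .
  ultimately show ?thesis
    by (simp add: Psi_def fexp_Cmap C)
qed

theorem Psi_unique:
  assumes P: "factor_closed P" and Q: "factor_closed Q"
    and \<Phi>: "\<Phi> ` (vanishing_on Q B \<times> vanishing_on P A) \<subseteq> vanishing_on P A \<times> vanishing_on Q B"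
    and exp: "\<forall>b\<in>vanishing_on Q B. \<forall>a\<in>vanishing_on P A.
      fmul (fexp sc b) (fexp sc a) = fmul (fexp sc (fst (\<Phi> (b, a)))) (fexp sc (snd (\<Phi> (b, a))))"
    and x: "x \<in> vanishing_on Q B \<times> vanishing_on P A"
  shows "\<Phi> x = Psi sc A B x"
proof -
  obtain b a where x_eq: "x = (b, a)" and ba: "b \<in> vanishing_on Q B" "a \<in> vanishing_on P A"
    using x by blast
  have "\<Phi> x \<in> vanishing_on P A \<times> vanishing_on Q B" "Psi sc A B x \<in> vanishing_on P A \<times> vanishing_on Q B"
    using \<Phi> x bij_betwE[OF Psi_bij_betw[OF P Q]] by blast+
  moreover have "fmul (fexp sc (fst (\<Phi> x))) (fexp sc (snd (\<Phi> x)))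
      = fmul (fexp sc (fst (Psi sc A B x))) (fexp sc (snd (Psi sc A B x)))"
    using exp ba fexp_Psi[OF P Q ba] by (simp add: x_eq)
  ultimately show ?thesis
    using inj_onD[OF fexp_product_inj_on[OF P Q]] by (simp add: case_prod_beta)
qed

end


theorem theorem4p3:
  fixes sc :: "'k::field_char_0 \<Rightarrow> 'a::ring_1 \<Rightarrow> 'a"
    and G Gm Gp :: "'a set"
  assumes alg: "kalg sc"
    and G_sub: "subspace_k sc G"
    and G_lie: "\<forall>x\<in>G. \<forall>y\<in>G. x * y - y * x \<in> G"
    and Gm_sub: "subspace_k sc Gm"
    and Gp_sub: "subspace_k sc Gp"
    and direct: "Gm \<inter> Gp = {0}"
    and decomp: "G = {m + p | m p. m \<in> Gm \<and> p \<in> Gp}"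
  shows
    "bij_betw (\<lambda>(am, ap). Cmap sc am ap) (sG Gm \<times> tG Gp) (Vset Gm Gp)
     \<and> (\<forall>v\<in>Vset Gm Gp. DP sc Gm Gp v \<in> sG Gm \<times> tG Gp
          \<and> Cmap sc (fst (DP sc Gm Gp v)) (snd (DP sc Gm Gp v)) = v)
     \<and> (\<forall>ap\<in>tG Gp. \<forall>am\<in>sG Gm. Cmap sc ap am \<in> gbar1 G)
     \<and> bij_betw (Psi sc Gm Gp) (tG Gp \<times> sG Gm) (sG Gm \<times> tG Gp)
     \<and> (\<forall>ap\<in>tG Gp. \<forall>am\<in>sG Gm.
          fmul (fexp sc ap) (fexp sc am)
          = fmul (fexp sc (fst (Psi sc Gm Gp (ap, am)))) (fexp sc (snd (Psi sc Gm Gp (ap, am)))))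
     \<and> (\<forall>\<Phi>. bij_betw \<Phi> (tG Gp \<times> sG Gm) (sG Gm \<times> tG Gp)
          \<and> (\<forall>ap\<in>tG Gp. \<forall>am\<in>sG Gm.
               fmul (fexp sc ap) (fexp sc am)
               = fmul (fexp sc (fst (\<Phi> (ap, am)))) (fexp sc (snd (\<Phi> (ap, am)))))
          \<longrightarrow> (\<forall>x\<in>tG Gp \<times> sG Gm. \<Phi> x = Psi sc Gm Gp x))"
proof -
  interpret lie_splitting sc G Gm Gp
    using assms by unfold_locales
  note axes = factor_closed_axis
  show ?thesis
    unfolding sG_eq_vanishing_on tG_eq_vanishing_on Vset_eq_cmap_target
    using Cmap_DP_bij_betw(1)[OF axes] DP_cmap_target[OF axes] Psi_bij_betw[OF axes] fexp_Psi[OF axes]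
      Psi_unique[OF axes] bij_betwE[OF Cmap_bij_betw_swapped[OF axes]]
    by (auto simp: cmap_target_def dest: bij_betw_imp_surj_on)
qed

end
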